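(* In the two-stage mining game, fix all parameters except $\eta$ and consider $\eta$ large enough that $A(\beta^* )=A(0)=\{1,\dots,n\}$. Then, as $\eta\to\infty$, for each active miner $i\le n$, $$h_i^*(\beta^* )=h_i^*(0)+a_iI_i+a_{-i}\bar I_{-i}+O(\bar I^2),$$ where $$a_{-i}:=\frac{h_{i,0}}{c_0^{(n)}+2\gamma H_0}\Big(1-\frac{H_0^2}{R+\gamma H_0^2}\cdot\frac{\tilde c_i+2\gamma h_{i,0}}{h_{i,0}}\Big),\qquad a_i:=\frac{H_0^2}{R+\gamma H_0^2}+a_{-i},$$ and these satisfy $a_i>0$ and $a_{-i}<0\iff h_{i,0}/H_0<1/2$. Moreover, $$\frac{h_i^*(\beta^* )}{H^*(\beta^* )}=\frac{h_{i,0}}{H_0}+\alpha_0\big((1-\alpha_i)I_i-\alpha_i\bar I_{-i}\big)+O(\bar I^2),$$ where $\alpha_0:=\frac{H_0}{R+\gamma H_0^2}>0$ and $\alpha_i:=\frac{\tilde c_i+2\gamma h_{i,0}}{c_0^{(n)}+2\gamma H_0}\in(0,1)$; and the quantity $(1-\alpha_i)I_i-\alpha_i\bar I_{-i}$ is increasing in the initial cost $\tilde c_i$ of miner $i$ (i.e., across active miners, it is larger for miners with larger initial cost). Here $O(\bar I^2)$ denotes a remainder bounded in absolute value by $C\bar I^2$ for some constant $C$ and all sufficiently large $\eta$.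
   Context: Two-stage mining game: $N\ge2$ miners with initial costs-per-hash $0<\tilde c_1\le\dots\le\tilde c_N$; newest hardware cost $\tilde c_0\le\tilde c_1$; parameters $\eta\ge0$, $R>0$, $\gamma\ge0$, $K>0$. Stage 1: miner $i$ picks $\beta_i\in[0,1]$, giving cost $c_i(\beta_i)=\tilde c_i-\beta_i(\tilde c_i-\tilde c_0)+\frac{\eta(\tilde c_i-\tilde c_0)}{2}\beta_i^2$. Stage 2: given $\beta$, miners pick $h_i\ge0$, $H=\sum_jh_j$, payoff $\frac{h_i}{H}R-c_i(\beta_i)h_i-\frac{\gamma}{2}h_i^2-K\mathbf 1_{\{i\notin A(0),\beta_i>0\}}$ if $H>0$, else $0$; $h^*(\beta)$ is the unique stage-2 pure Nash equilibrium, $H^*(\beta)=\sum_jh^*_j(\beta)$, $A(\beta)=\{i:h_i^*(\beta)>0\}$. The equilibrium investment (subgame-perfect in $\beta$) is $\beta_i^*=\min\{1/\eta,1\}$ for active miners and $0$ otherwise. Notation: $H_0=H^*(0)$, $h_{i,0}=h_i^*(0)$, $c_0^{(n)}=\sum_{i=1}^n\tilde c_i$; the cost reduction of active miner $i$ is $I_i:=c_i(0)-c_i(\beta_i^* )$, which equals $(\tilde c_i-\tilde c_0)/(2\eta)$ for $\eta>1$; $\bar I=\sum_{i=1}^nI_i$ and $\bar I_{-i}=\bar I-I_i$. *)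

theory Defs
  imports Complex_Main
begin

text \<open>Costs are given by ct :: nat => real with
  ct 0 = newest hardware cost and ct i (1 <= i <= N) the initial cost of miner i.
  Strategy profiles and investment profiles are functions nat => real; only
  indices 1..N matter (hash-rate profiles are required to vanish elsewhere).\<close>

definition cost :: "(nat \<Rightarrow> real) \<Rightarrow> real \<Rightarrow> nat \<Rightarrow> real \<Rightarrow> real" where
  "cost ct \<eta> i b = ct i - b * (ct i - ct 0) + \<eta> * (ct i - ct 0) / 2 * b ^ 2"

definition totH :: "nat \<Rightarrow> (nat \<Rightarrow> real) \<Rightarrow> real" where
  "totH N h = (\<Sum>j\<in>{1..N}. h j)"

text \<open>Stage-2 payoff of miner i; A0 is the set of miners active at beta = 0
  (it only enters through the fixed cost K).\<close>
definition payoff :: "(nat \<Rightarrow> real) \<Rightarrow> real \<Rightarrow> real \<Rightarrow> real \<Rightarrow> real \<Rightarrow> nat \<Rightarrow> nat set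
    \<Rightarrow> (nat \<Rightarrow> real) \<Rightarrow> (nat \<Rightarrow> real) \<Rightarrow> nat \<Rightarrow> real" where
  "payoff ct \<eta> R \<gamma> K N A0 \<beta> h i =
     (if totH N h > 0 then
        h i / totH N h * R - cost ct \<eta> i (\<beta> i) * h i - \<gamma> / 2 * (h i)\<^sup>2
          - K * (if i \<notin> A0 \<and> \<beta> i > 0 then 1 else 0)
      else 0)"

definition is_NE :: "(nat \<Rightarrow> real) \<Rightarrow> real \<Rightarrow> real \<Rightarrow> real \<Rightarrow> real \<Rightarrow> nat \<Rightarrow> nat set
    \<Rightarrow> (nat \<Rightarrow> real) \<Rightarrow> (nat \<Rightarrow> real) \<Rightarrow> bool" where
  "is_NE ct \<eta> R \<gamma> K N A0 \<beta> h \<longleftrightarrow>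
     (\<forall>i. i \<notin> {1..N} \<longrightarrow> h i = 0) \<and>
     (\<forall>i\<in>{1..N}. 0 \<le> h i \<and>
        (\<forall>x\<ge>0. payoff ct \<eta> R \<gamma> K N A0 \<beta> (h(i := x)) i \<le> payoff ct \<eta> R \<gamma> K N A0 \<beta> h i))"

definition eqm :: "(nat \<Rightarrow> real) \<Rightarrow> real \<Rightarrow> real \<Rightarrow> real \<Rightarrow> real \<Rightarrow> nat \<Rightarrow> nat set
    \<Rightarrow> (nat \<Rightarrow> real) \<Rightarrow> (nat \<Rightarrow> real)" where
  "eqm ct \<eta> R \<gamma> K N A0 \<beta> = (THE h. is_NE ct \<eta> R \<gamma> K N A0 \<beta> h)"

text \<open>A(0): at beta = 0 the fixed-cost term vanishes, so A0 is irrelevant there.\<close>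
definition Azero :: "(nat \<Rightarrow> real) \<Rightarrow> real \<Rightarrow> real \<Rightarrow> real \<Rightarrow> real \<Rightarrow> nat \<Rightarrow> nat set" where
  "Azero ct \<eta> R \<gamma> K N = {i\<in>{1..N}. eqm ct \<eta> R \<gamma> K N {} (\<lambda>_. 0) i > 0}"

definition hstar :: "(nat \<Rightarrow> real) \<Rightarrow> real \<Rightarrow> real \<Rightarrow> real \<Rightarrow> real \<Rightarrow> nat
    \<Rightarrow> (nat \<Rightarrow> real) \<Rightarrow> (nat \<Rightarrow> real)" where
  "hstar ct \<eta> R \<gamma> K N \<beta> = eqm ct \<eta> R \<gamma> K N (Azero ct \<eta> R \<gamma> K N) \<beta>"

definition active :: "(nat \<Rightarrow> real) \<Rightarrow> real \<Rightarrow> real \<Rightarrow> real \<Rightarrow> real \<Rightarrow> nat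
    \<Rightarrow> (nat \<Rightarrow> real) \<Rightarrow> nat set" where
  "active ct \<eta> R \<gamma> K N \<beta> = {i\<in>{1..N}. hstar ct \<eta> R \<gamma> K N \<beta> i > 0}"

definition beta_star :: "real \<Rightarrow> nat \<Rightarrow> nat \<Rightarrow> real" where
  "beta_star \<eta> n i = (if 1 \<le> i \<and> i \<le> n then min (1 / \<eta>) 1 else 0)"

definition Ired :: "(nat \<Rightarrow> real) \<Rightarrow> real \<Rightarrow> nat \<Rightarrow> nat \<Rightarrow> real" where
  "Ired ct \<eta> n i = cost ct \<eta> i 0 - cost ct \<eta> i (beta_star \<eta> n i)"

end

theory Submission
  imports Defs "HOL-Library.Landau_Symbols"
begin

text \<open>
  For fixed costs \<open>c\<close>, a stage-2 equilibrium is pinned down by first-order conditions: a miner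
  of cost \<open>c\<^sub>i\<close> holds \<open>h\<^sub>i = H max(0, R - c\<^sub>i H) / (R + \<gamma> H\<^sup>2)\<close> of the total \<open>H\<close>, and \<open>H\<close> is
  the root of "the shares sum to 1". The shares decrease in \<open>H\<close>, so the root is unique, and the
  intermediate value theorem gives existence. Summing the conditions of the active miners
  \<open>1..n\<close> yields the aggregate equation \<open>\<gamma> H\<^sup>2 + (\<Sum> c\<^sub>i) H = (n - 1) R\<close>.

  Investing lowers the cost of miner \<open>i \<le> n\<close> by \<open>I\<^sub>i = (c\<^sub>i - c\<^sub>0) / (2 \<eta>)\<close>, so the
  equilibrium after investment solves the same equations with costs \<open>c\<^sub>i - I\<^sub>i\<close>, and \<open>Ibar = \<Sum> I\<^sub>i\<close> tends to 0.
  Expanding first the aggregate equation, then \<open>h\<^sub>i = (R H - (c\<^sub>i - I\<^sub>i) H\<^sup>2) / (R + \<gamma> H\<^sup>2)\<close> and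
  \<open>h\<^sub>i / H\<close>, to first order in \<open>Ibar\<close> with remainders \<open>O(Ibar\<^sup>2)\<close> gives the coefficients; their
  signs, and the monotonicity of the share shift, follow from the baseline first-order conditions.
\<close>

section \<open>Stage-2 equilibrium for given costs\<close>

definition stage2_payoff :: "nat \<Rightarrow> real \<Rightarrow> real \<Rightarrow> (nat \<Rightarrow> real) \<Rightarrow> (nat \<Rightarrow> real) \<Rightarrow> nat \<Rightarrow> real"
  where "stage2_payoff N R \<gamma> c h i =
    (if totH N h > 0 then h i / totH N h * R - c i * h i - \<gamma> / 2 * (h i)\<^sup>2 else 0)"

definition stage2_NE :: "nat \<Rightarrow> real \<Rightarrow> real \<Rightarrow> (nat \<Rightarrow> real) \<Rightarrow> (nat \<Rightarrow> real) \<Rightarrow> bool"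
  where "stage2_NE N R \<gamma> c h \<longleftrightarrow> (\<forall>i. i \<notin> {1..N} \<longrightarrow> h i = 0) \<and>
    (\<forall>i\<in>{1..N}. 0 \<le> h i \<and>
       (\<forall>x\<ge>0. stage2_payoff N R \<gamma> c (h(i := x)) i \<le> stage2_payoff N R \<gamma> c h i))"

lemma is_NE_iff_stage2_NE:
  assumes "\<forall>i\<in>{1..N}. i \<in> A0 \<or> \<beta> i \<le> 0"
  shows "is_NE ct \<eta> R \<gamma> K N A0 \<beta> h \<longleftrightarrow> stage2_NE N R \<gamma> (\<lambda>i. cost ct \<eta> i (\<beta> i)) h"
  using assms unfolding is_NE_def stage2_NE_def payoff_def stage2_payoff_def
  by (auto simp: not_less)

lemma totH_eq_rest:
  assumes "i \<in> {1..N}"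
  shows "totH N h = h i + (\<Sum>j\<in>{1..N} - {i}. h j)"
  unfolding totH_def using assms by (simp add: sum.remove)

lemma totH_fun_upd:
  assumes "i \<in> {1..N}"
  shows "totH N (h(i := x)) = totH N h - h i + x"
  using totH_eq_rest[OF assms, of "h(i := x)"] totH_eq_rest[OF assms, of h] by simp

lemma totH_ge_component:
  assumes "\<forall>j\<in>{1..N}. 0 \<le> h j" "i \<in> {1..N}"
  shows "h i \<le> totH N h"
proof -
  have "0 \<le> (\<Sum>j\<in>{1..N} - {i}. h j)" using assms(1) by (intro sum_nonneg) auto
  then show ?thesis using totH_eq_rest[OF assms(2), of h] by simp
qed

definition tullock_gain :: "real \<Rightarrow> real \<Rightarrow> real \<Rightarrow> real \<Rightarrow> real \<Rightarrow> real"
  where "tullock_gain R \<gamma> c S x = x / (x + S) * R - c * x - \<gamma> / 2 * x\<^sup>2"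

lemma stage2_payoff_fun_upd:
  assumes "i \<in> {1..N}" "totH N h - h i > 0" "x \<ge> 0"
  shows "stage2_payoff N R \<gamma> c (h(i := x)) i = tullock_gain R \<gamma> (c i) (totH N h - h i) x"
  using assms unfolding stage2_payoff_def tullock_gain_def totH_fun_upd[OF assms(1)]
  by (simp add: add.commute)

lemma stage2_payoff_eq_tullock_gain:
  assumes "i \<in> {1..N}" "totH N h - h i > 0" "h i \<ge> 0"
  shows "stage2_payoff N R \<gamma> c h i = tullock_gain R \<gamma> (c i) (totH N h - h i) (h i)"
  using stage2_payoff_fun_upd[OF assms] by simp

lemma tullock_gain_deriv:
  assumes "x + S \<noteq> 0"
  shows "(tullock_gain R \<gamma> c S has_real_derivative S * R / (x + S)\<^sup>2 - c - \<gamma> * x) (at x)"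
  unfolding tullock_gain_def
  by (rule derivative_eq_intros refl | use assms in \<open>simp add: field_simps power2_eq_square\<close>)+

lemma tullock_gain_le_at_foc:
  assumes "S > 0" "y > 0" "x \<ge> 0" "R > 0" "\<gamma> \<ge> 0"
    and foc: "y * (R + \<gamma> * (y + S)\<^sup>2) = R * (y + S) - c * (y + S)\<^sup>2"
  shows "tullock_gain R \<gamma> c S x \<le> tullock_gain R \<gamma> c S y"
proof -
  have pos: "y + S > 0" "x + S > 0" using assms by auto
  have "c * (y + S)\<^sup>2 = R * S - \<gamma> * y * (y + S)\<^sup>2"
    using foc by (simp add: algebra_simps)
  then have c: "c = R * S / (y + S)\<^sup>2 - \<gamma> * y"
    using pos by (simp add: field_simps)
  have "tullock_gain R \<gamma> c S y - tullock_gain R \<gamma> c S x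
      = (x - y)\<^sup>2 * (R * S / ((x + S) * (y + S)\<^sup>2) + \<gamma> / 2)"
  proof -
    have ne: "y + S \<noteq> 0" "x + S \<noteq> 0" "S * 2 + y * 2 \<noteq> 0" "S * 2 + x * 2 \<noteq> 0"
      using pos by auto
    show ?thesis
      unfolding tullock_gain_def c
      by (simp add: divide_simps ne) (simp add: algebra_simps power2_eq_square ne)
  qed
  moreover have "(x - y)\<^sup>2 * (R * S / ((x + S) * (y + S)\<^sup>2) + \<gamma> / 2) \<ge> 0"
    using assms pos by simp
  ultimately show ?thesis by linarith
qed

lemma tullock_gain_nonpos:
  assumes "S > 0" "x \<ge> 0" "R > 0" "\<gamma> \<ge> 0" "R \<le> c * S"
  shows "tullock_gain R \<gamma> c S x \<le> 0"
proof -
  have "x / (x + S) * R \<le> x / S * R"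
    using assms by (intro mult_right_mono divide_left_mono) auto
  also have "\<dots> \<le> c * x"
    using mult_left_mono[OF assms(5) assms(2)] assms(1) by (simp add: field_simps)
  finally have "x / (x + S) * R \<le> c * x" .
  moreover have "0 \<le> \<gamma> / 2 * x\<^sup>2" using assms(4) by simp
  ultimately show ?thesis unfolding tullock_gain_def by linarith
qed

lemma tullock_gain_pos_near_0:
  assumes "S > 0" "R > c * S"
  shows "\<exists>x>0. tullock_gain R \<gamma> c S x > 0"
proof -
  have "0 < S * R / (0 + S)\<^sup>2 - c - \<gamma> * 0"
    using assms by (simp add: field_simps power2_eq_square)
  from DERIV_pos_inc_right[OF tullock_gain_deriv this] assms(1)
  obtain d where "d > 0" "\<forall>x>0. x < d \<longrightarrow> tullock_gain R \<gamma> c S 0 < tullock_gain R \<gamma> c S x"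
    by auto
  then have "tullock_gain R \<gamma> c S 0 < tullock_gain R \<gamma> c S (0 + d / 2)" by simp
  then show ?thesis
    using \<open>d > 0\<close> by (intro exI[of _ "d / 2"]) (simp add: tullock_gain_def)
qed

lemma stage2_NE_rest_pos:
  assumes NE: "stage2_NE N R \<gamma> c h" and "R > 0" "\<gamma> \<ge> 0" "c i > 0" and i: "i \<in> {1..N}"
  shows "totH N h - h i > 0"
proof (rule ccontr)
  assume "\<not> totH N h - h i > 0"
  moreover have nn: "\<forall>j\<in>{1..N}. 0 \<le> h j"
    and dev: "\<And>x. x \<ge> 0 \<Longrightarrow> stage2_payoff N R \<gamma> c (h(i := x)) i \<le> stage2_payoff N R \<gamma> c h i"
    using NE i unfolding stage2_NE_def by auto
  ultimately have S0: "totH N h = h i" using totH_ge_component[OF _ i] by force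
  define \<phi> where "\<phi> x = R - c i * x - \<gamma> / 2 * x\<^sup>2" for x
  have upd: "stage2_payoff N R \<gamma> c (h(i := x)) i = \<phi> x" if "x > 0" for x
    using that unfolding stage2_payoff_def \<phi>_def totH_fun_upd[OF i] S0 by simp
  show False
  proof (cases "h i > 0")
    case True
    have "c i * (h i / 2) < c i * h i" "\<gamma> / 2 * (h i / 2)\<^sup>2 \<le> \<gamma> / 2 * (h i)\<^sup>2"
      using True assms(3,4) by (auto intro!: mult_left_mono power_mono)
    then have "\<phi> (h i) < \<phi> (h i / 2)" unfolding \<phi>_def by linarith
    then show False using dev[of "h i / 2"] upd[of "h i / 2"] upd[OF True] True by simp
  next
    case False
    then have "stage2_payoff N R \<gamma> c h i = 0"
      unfolding stage2_payoff_def using S0 nn i by force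
    define x where "x = min 1 (R / (2 * (c i + \<gamma>)))"
    have x: "0 < x" "x \<le> 1" and "x \<le> R / (2 * (c i + \<gamma>))"
      unfolding x_def using assms(2-4) by auto
    then have "(c i + \<gamma>) * x \<le> R / 2"
      using assms(3,4) by (simp add: field_simps)
    moreover have "\<gamma> / 2 * x\<^sup>2 \<le> \<gamma> * x"
    proof -
      have "x * x \<le> x" using x by (simp add: mult_left_le_one_le)
      then have "\<gamma> * (x * x) \<le> \<gamma> * x" using assms(3) by (rule mult_left_mono)
      moreover have "0 \<le> \<gamma> * x" using assms(3) x by simp
      ultimately show ?thesis unfolding power2_eq_square by linarith
    qed
    ultimately have "\<phi> x > 0" unfolding \<phi>_def using x assms(2,3) by (simp add: algebra_simps)
    then show False using dev[of x] upd[of x] x \<open>stage2_payoff N R \<gamma> c h i = 0\<close> by simp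
  qed
qed

lemma stage2_NE_foc:
  assumes NE: "stage2_NE N R \<gamma> c h" and "R > 0" "\<gamma> \<ge> 0" "c i > 0" and i: "i \<in> {1..N}"
    and pos: "h i > 0"
  shows "h i * (R + \<gamma> * (totH N h)\<^sup>2) = R * totH N h - c i * (totH N h)\<^sup>2"
proof -
  define S where "S = totH N h - h i"
  have S: "S > 0" unfolding S_def using stage2_NE_rest_pos[OF assms(1-5)] .
  have "\<forall>z. \<bar>h i - z\<bar> < h i \<longrightarrow> tullock_gain R \<gamma> (c i) S z \<le> tullock_gain R \<gamma> (c i) S (h i)"
    using NE i S pos unfolding S_def stage2_NE_def
    by (auto simp: stage2_payoff_fun_upd[symmetric] stage2_payoff_eq_tullock_gain[symmetric])
  moreover have "(tullock_gain R \<gamma> (c i) S has_real_derivative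
      S * R / (h i + S)\<^sup>2 - c i - \<gamma> * h i) (at (h i))"
    using S pos by (intro tullock_gain_deriv) simp
  ultimately have "S * R / (h i + S)\<^sup>2 - c i - \<gamma> * h i = 0"
    using DERIV_local_max pos by blast
  with S pos have "S * R = (c i + \<gamma> * h i) * (h i + S)\<^sup>2"
    by (simp add: field_simps)
  then show ?thesis unfolding S_def by (simp add: algebra_simps)
qed

lemma stage2_NE_inactive:
  assumes NE: "stage2_NE N R \<gamma> c h" and "R > 0" "\<gamma> \<ge> 0" "c i > 0" and i: "i \<in> {1..N}"
    and zero: "h i = 0"
  shows "R \<le> c i * totH N h"
proof (rule ccontr)
  define S where "S = totH N h - h i"
  have S: "S > 0" unfolding S_def using stage2_NE_rest_pos[OF assms(1-5)] .
  assume "\<not> R \<le> c i * totH N h"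
  then have "R > c i * S" unfolding S_def using zero by simp
  then obtain x where "x > 0" "tullock_gain R \<gamma> (c i) S x > 0"
    using tullock_gain_pos_near_0[OF S] by blast
  moreover have "stage2_payoff N R \<gamma> c (h(i := x)) i \<le> stage2_payoff N R \<gamma> c h i"
    using NE i \<open>x > 0\<close> unfolding stage2_NE_def by auto
  then have "tullock_gain R \<gamma> (c i) S x \<le> tullock_gain R \<gamma> (c i) S 0"
    using stage2_payoff_fun_upd[OF i _ less_imp_le[OF \<open>x > 0\<close>]]
      stage2_payoff_eq_tullock_gain[OF i] S zero unfolding S_def by simp
  ultimately show False by (simp add: tullock_gain_def)
qed

lemma stage2_NE_intro:
  assumes "R > 0" "\<gamma> \<ge> 0"
    and "\<forall>i. i \<notin> {1..N} \<longrightarrow> h i = 0"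
    and nn: "\<forall>i\<in>{1..N}. 0 \<le> h i"
    and rest: "\<forall>i\<in>{1..N}. totH N h - h i > 0"
    and foc: "\<forall>i\<in>{1..N}. h i > 0 \<longrightarrow>
                h i * (R + \<gamma> * (totH N h)\<^sup>2) = R * totH N h - c i * (totH N h)\<^sup>2"
    and inactive: "\<forall>i\<in>{1..N}. h i = 0 \<longrightarrow> R \<le> c i * totH N h"
  shows "stage2_NE N R \<gamma> c h"
  unfolding stage2_NE_def
proof (intro conjI ballI allI impI)
  fix i and x :: real assume i: "i \<in> {1..N}" and x: "0 \<le> x"
  define S where "S = totH N h - h i"
  have S: "S > 0" and H: "totH N h = h i + S" using rest i unfolding S_def by auto
  have "tullock_gain R \<gamma> (c i) S x \<le> tullock_gain R \<gamma> (c i) S (h i)"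
  proof (cases "h i > 0")
    case True
    then show ?thesis
      using tullock_gain_le_at_foc[OF S True x assms(1,2)] foc i H by auto
  next
    case False
    then have "h i = 0" using nn i by force
    then show ?thesis
      using tullock_gain_nonpos[OF S x assms(1,2)] inactive i H by (auto simp: tullock_gain_def)
  qed
  then show "stage2_payoff N R \<gamma> c (h(i := x)) i \<le> stage2_payoff N R \<gamma> c h i"
    using stage2_payoff_fun_upd[OF i _ x] stage2_payoff_eq_tullock_gain[OF i] S nn i
    unfolding S_def by simp
qed (use assms in auto)

definition equilibrium_share :: "real \<Rightarrow> real \<Rightarrow> real \<Rightarrow> real \<Rightarrow> real"
  where "equilibrium_share R \<gamma> c H = max 0 (R - c * H) / (R + \<gamma> * H\<^sup>2)"

lemma equilibrium_share_less_1:
  assumes "R > 0" "\<gamma> \<ge> 0" "c > 0" "H > 0"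
  shows "equilibrium_share R \<gamma> c H < 1"
proof -
  have "c * H > 0" "\<gamma> * H\<^sup>2 \<ge> 0" using assms by auto
  then have "max 0 (R - c * H) < R + \<gamma> * H\<^sup>2"
    using assms(1) by linarith
  then show ?thesis
    unfolding equilibrium_share_def using assms by (simp add: add_pos_nonneg)
qed

lemma equilibrium_share_antimono:
  assumes "R > 0" "\<gamma> \<ge> 0" "c \<ge> 0" "0 < H1" "H1 \<le> H2"
  shows "equilibrium_share R \<gamma> c H2 \<le> equilibrium_share R \<gamma> c H1"
proof -
  have "R + \<gamma> * H1\<^sup>2 \<le> R + \<gamma> * H2\<^sup>2"
    using assms by (simp add: mult_left_mono power_mono)
  moreover have "c * H1 \<le> c * H2" using assms by (simp add: mult_left_mono)
  then have "max 0 (R - c * H2) \<le> max 0 (R - c * H1)" by linarith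
  ultimately show ?thesis
    unfolding equilibrium_share_def using assms
    by (intro frac_le) (auto simp: add_pos_nonneg)
qed

lemma equilibrium_share_strict_antimono:
  assumes "R > 0" "\<gamma> \<ge> 0" "c > 0" "0 < H1" "H1 < H2" "equilibrium_share R \<gamma> c H2 > 0"
  shows "equilibrium_share R \<gamma> c H2 < equilibrium_share R \<gamma> c H1"
proof -
  have "R + \<gamma> * H1\<^sup>2 \<le> R + \<gamma> * H2\<^sup>2"
    using assms by (simp add: mult_left_mono power_mono)
  moreover have "R - c * H2 > 0"
    using assms(6) unfolding equilibrium_share_def by (auto simp: zero_less_divide_iff)
  moreover have "c * H1 < c * H2" using assms by simp
  ultimately have "max 0 (R - c * H2) < max 0 (R - c * H1)" "R + \<gamma> * H1\<^sup>2 \<le> R + \<gamma> * H2\<^sup>2"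
    by linarith+
  then show ?thesis
    unfolding equilibrium_share_def using assms
    by (intro frac_less) (auto simp: add_pos_nonneg)
qed

lemma equilibrium_share_ge_half:
  assumes "R > 0" "\<gamma> \<ge> 0" "c > 0" "0 < H" "H \<le> 1" "2 * (c + \<gamma>) * H \<le> R"
  shows "equilibrium_share R \<gamma> c H \<ge> 1 / 2"
proof -
  have "\<gamma> * H\<^sup>2 \<le> \<gamma> * H"
    using assms by (simp add: power2_eq_square mult_left_le_one_le mult_left_mono)
  moreover have "\<gamma> * H \<ge> 0" using assms by simp
  ultimately have "2 * c * H + \<gamma> * H\<^sup>2 \<le> R" using assms(6) by (simp add: algebra_simps)
  moreover have "c * H > 0" "\<gamma> * H\<^sup>2 \<ge> 0" using assms by simp_all
  ultimately have "max 0 (R - c * H) = R - c * H" "R + \<gamma> * H\<^sup>2 \<le> 2 * (R - c * H)"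
    by auto
  moreover have "R + \<gamma> * H\<^sup>2 > 0" using assms by (simp add: add_pos_nonneg)
  ultimately show ?thesis
    unfolding equilibrium_share_def by (simp add: field_simps)
qed

lemma continuous_on_equilibrium_share:
  assumes "R > 0" "\<gamma> \<ge> 0"
  shows "continuous_on A (equilibrium_share R \<gamma> c)"
proof -
  have "R + \<gamma> * H\<^sup>2 > 0" for H
    using assms by (simp add: add_pos_nonneg)
  then have "R + \<gamma> * H\<^sup>2 \<noteq> 0" for H
    by (metis less_irrefl)
  then show ?thesis
    unfolding equilibrium_share_def by (intro continuous_intros) auto
qed

lemma eq_times_equilibrium_share_iff:
  assumes "R > 0" "\<gamma> \<ge> 0" "H > 0"
  shows "x = H * equilibrium_share R \<gamma> c H \<longleftrightarrow>
    (x > 0 \<and> x * (R + \<gamma> * H\<^sup>2) = R * H - c * H\<^sup>2) \<or> (x = 0 \<and> R \<le> c * H)"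
proof -
  have D: "R + \<gamma> * H\<^sup>2 > 0" using assms by (simp add: add_pos_nonneg)
  show ?thesis
  proof (cases "R - c * H > 0")
    case True
    then have "x = H * equilibrium_share R \<gamma> c H \<longleftrightarrow> x * (R + \<gamma> * H\<^sup>2) = H * (R - c * H)"
      unfolding equilibrium_share_def using D by (auto simp: field_simps)
    moreover have "x > 0" if "x * (R + \<gamma> * H\<^sup>2) = H * (R - c * H)"
    proof -
      have "0 < x * (R + \<gamma> * H\<^sup>2)" unfolding that using True assms(3) by simp
      then show ?thesis using D by (simp add: zero_less_mult_iff)
    qed
    ultimately show ?thesis using True by (auto simp: algebra_simps power2_eq_square)
  next
    case False
    have "R * H - c * H\<^sup>2 = H * (R - c * H)" by (simp add: algebra_simps power2_eq_square)
    also have "\<dots> \<le> 0" using False assms(3) by (simp add: mult_nonneg_nonpos)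
    finally have "x \<le> 0" if "x * (R + \<gamma> * H\<^sup>2) = R * H - c * H\<^sup>2"
      using that D by (metis mult_le_0_iff not_less)
    then show ?thesis
      using False unfolding equilibrium_share_def by (auto simp: max_def)
  qed
qed

lemma stage2_NE_total_pos:
  assumes NE: "stage2_NE N R \<gamma> c h" and "R > 0" "\<gamma> \<ge> 0" "N \<ge> 1" "\<forall>i\<in>{1..N}. c i > 0"
  shows "totH N h > 0"
proof -
  have "1 \<in> {1..N}" using assms(4) by simp
  with NE show ?thesis
    using stage2_NE_rest_pos[OF NE assms(2,3)] assms(5) unfolding stage2_NE_def by force
qed

lemma stage2_NE_eq_share:
  assumes NE: "stage2_NE N R \<gamma> c h" and "R > 0" "\<gamma> \<ge> 0" "N \<ge> 1" "\<forall>i\<in>{1..N}. c i > 0"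
    and i: "i \<in> {1..N}"
  shows "h i = totH N h * equilibrium_share R \<gamma> (c i) (totH N h)"
proof -
  have ci: "c i > 0" using assms(5) i by blast
  have "h i \<ge> 0" using NE i unfolding stage2_NE_def by auto
  then consider "h i > 0" | "h i = 0" by linarith
  then show ?thesis
  proof cases
    case 1
    then show ?thesis
      using eq_times_equilibrium_share_iff[OF assms(2,3) stage2_NE_total_pos[OF assms(1-5)]]
        stage2_NE_foc[OF NE assms(2,3) ci i] by blast
  next
    case 2
    then show ?thesis
      using eq_times_equilibrium_share_iff[OF assms(2,3) stage2_NE_total_pos[OF assms(1-5)]]
        stage2_NE_inactive[OF NE assms(2,3) ci i] by blast
  qed
qed

lemma stage2_NE_share_sum:
  assumes NE: "stage2_NE N R \<gamma> c h" and "R > 0" "\<gamma> \<ge> 0" "N \<ge> 1" "\<forall>i\<in>{1..N}. c i > 0"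
  shows "(\<Sum>i\<in>{1..N}. equilibrium_share R \<gamma> (c i) (totH N h)) = 1"
proof -
  let ?H = "totH N h"
  have "?H = (\<Sum>i\<in>{1..N}. h i)" by (simp add: totH_def)
  also have "\<dots> = (\<Sum>i\<in>{1..N}. ?H * equilibrium_share R \<gamma> (c i) ?H)"
    by (rule sum.cong[OF refl]) (rule stage2_NE_eq_share[OF assms])
  also have "\<dots> = ?H * (\<Sum>i\<in>{1..N}. equilibrium_share R \<gamma> (c i) ?H)"
    by (simp add: sum_distrib_left)
  finally show ?thesis using stage2_NE_total_pos[OF assms] by simp
qed

text \<open>Summed equilibrium shares strictly decrease in the total wherever they are positive,
  so they sum to 1 at only one total.\<close>
lemma stage2_NE_total_unique:
  assumes "stage2_NE N R \<gamma> c h1" "stage2_NE N R \<gamma> c h2"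
    and "R > 0" "\<gamma> \<ge> 0" "N \<ge> 1" and cpos: "\<forall>i\<in>{1..N}. c i > 0"
  shows "totH N h1 = totH N h2"
proof -
  have False if NE: "stage2_NE N R \<gamma> c a" "stage2_NE N R \<gamma> c b" and lt: "totH N a < totH N b"
    for a b
  proof -
    let ?s = "\<lambda>i H. equilibrium_share R \<gamma> (c i) H"
    have sum_a: "(\<Sum>i\<in>{1..N}. ?s i (totH N a)) = 1" and sum_b: "(\<Sum>i\<in>{1..N}. ?s i (totH N b)) = 1"
      using stage2_NE_share_sum[OF NE(1) assms(3-6)] stage2_NE_share_sum[OF NE(2) assms(3-6)]
      by simp_all
    have Ha: "totH N a > 0" using stage2_NE_total_pos[OF NE(1) assms(3-6)] .
    have "\<exists>j\<in>{1..N}. ?s j (totH N b) > 0"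
    proof (rule ccontr)
      assume "\<not> (\<exists>j\<in>{1..N}. ?s j (totH N b) > 0)"
      then have "(\<Sum>i\<in>{1..N}. ?s i (totH N b)) \<le> 0" by (intro sum_nonpos) (auto simp: not_less)
      then show False using sum_b by simp
    qed
    then obtain j where j: "j \<in> {1..N}" "?s j (totH N b) > 0" by blast
    have "(\<Sum>i\<in>{1..N}. ?s i (totH N b)) < (\<Sum>i\<in>{1..N}. ?s i (totH N a))"
    proof (rule sum_strict_mono_ex1)
      show "\<forall>i\<in>{1..N}. ?s i (totH N b) \<le> ?s i (totH N a)"
        using equilibrium_share_antimono[OF assms(3,4) _ Ha] lt cpos by (simp add: less_imp_le)
      show "\<exists>i\<in>{1..N}. ?s i (totH N b) < ?s i (totH N a)"
        using equilibrium_share_strict_antimono[OF assms(3,4) _ Ha lt j(2)] j(1) cpos by blast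
    qed simp
    then show False using sum_a sum_b by simp
  qed
  then show ?thesis using assms(1,2) by (metis linorder_neqE)
qed

lemma stage2_NE_unique:
  assumes "stage2_NE N R \<gamma> c h1" "stage2_NE N R \<gamma> c h2"
    and "R > 0" "\<gamma> \<ge> 0" "N \<ge> 1" "\<forall>i\<in>{1..N}. c i > 0"
  shows "h1 = h2"
proof
  fix i
  show "h1 i = h2 i"
  proof (cases "i \<in> {1..N}")
    case True
    then show ?thesis
      using stage2_NE_eq_share[OF assms(1) assms(3-6) True]
        stage2_NE_eq_share[OF assms(2) assms(3-6) True]
        stage2_NE_total_unique[OF assms] by simp
  next
    case False
    then show ?thesis using assms(1,2) unfolding stage2_NE_def by auto
  qed
qed

lemma equilibrium_share_sum_root:
  fixes c :: "nat \<Rightarrow> real"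
  assumes N: "N \<ge> 2" and R: "R > 0" and \<gamma>: "\<gamma> \<ge> 0" and cpos: "\<forall>i\<in>{1..N}. c i > 0"
  shows "\<exists>H>0. (\<Sum>i\<in>{1..N}. equilibrium_share R \<gamma> (c i) H) = 1"
proof -
  let ?s = "\<lambda>H. \<Sum>i\<in>{1..N}. equilibrium_share R \<gamma> (c i) H"
  define M where "M = Max (c ` {1..N})"
  define m where "m = Min (c ` {1..N})"
  have cM: "c i \<le> M" and cm: "m \<le> c i" if "i \<in> {1..N}" for i
    using that unfolding M_def m_def by auto
  have m: "m > 0" unfolding m_def using cpos N by (subst Min_gr_iff) auto
  have mM: "m \<le> M" using cm[of 1] cM[of 1] N by simp
  define a where "a = min 1 (R / (2 * (M + \<gamma>)))"
  define b where "b = R / m"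
  have a: "0 < a" "a \<le> 1" "a \<le> R / (2 * (M + \<gamma>))"
    unfolding a_def using R \<gamma> m mM by auto
  have "2 * (c i + \<gamma>) * a \<le> R" if "i \<in> {1..N}" for i
  proof -
    have "2 * (c i + \<gamma>) * a \<le> 2 * (M + \<gamma>) * a"
      using cM[OF that] a(1) by (simp add: mult_right_mono)
    also have "\<dots> \<le> R" using a(3) m mM \<gamma> by (simp add: field_simps)
    finally show ?thesis .
  qed
  then have "(\<Sum>i\<in>{1..N}. 1 / 2) \<le> ?s a"
    using equilibrium_share_ge_half[OF R \<gamma> _ a(1,2)] cpos by (intro sum_mono) auto
  then have "1 \<le> ?s a" using N by simp
  moreover have "?s b = 0"
  proof (intro sum.neutral ballI)
    fix i assume "i \<in> {1..N}"
    then have "R \<le> c i * b" using cm m R unfolding b_def by (simp add: field_simps)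
    then show "equilibrium_share R \<gamma> (c i) b = 0" unfolding equilibrium_share_def by simp
  qed
  moreover have "R / (2 * (M + \<gamma>)) \<le> R / m" using R m mM \<gamma> by (intro divide_left_mono) auto
  then have "a \<le> b" using a(3) unfolding b_def by linarith
  moreover have "continuous_on {a..b} ?s"
    using continuous_on_equilibrium_share[OF R \<gamma>] by (intro continuous_on_sum) auto
  ultimately obtain H where "a \<le> H" "?s H = 1"
    using IVT2'[of ?s b 1 a] by auto
  then show ?thesis using a(1) by (intro exI[of _ H]) auto
qed

lemma stage2_NE_of_share_sum:
  assumes R: "R > 0" and \<gamma>: "\<gamma> \<ge> 0" and cpos: "\<forall>i\<in>{1..N}. c i > 0"
    and H: "H > 0" "(\<Sum>i\<in>{1..N}. equilibrium_share R \<gamma> (c i) H) = 1"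
  shows "stage2_NE N R \<gamma> c (\<lambda>i. if i \<in> {1..N} then H * equilibrium_share R \<gamma> (c i) H else 0)"
    (is "stage2_NE N R \<gamma> c ?h")
proof -
  have tot: "totH N ?h = H"
    using H unfolding totH_def by (simp add: sum_distrib_left[symmetric])
  have "?h i > 0 \<and> ?h i * (R + \<gamma> * (totH N ?h)\<^sup>2) = R * totH N ?h - c i * (totH N ?h)\<^sup>2
      \<or> ?h i = 0 \<and> R \<le> c i * totH N ?h" if "i \<in> {1..N}" for i
    using that eq_times_equilibrium_share_iff[OF R \<gamma> H(1), of "?h i" "c i"] unfolding tot by simp
  moreover have "?h i < totH N ?h" if "i \<in> {1..N}" for i
    using equilibrium_share_less_1[OF R \<gamma> _ H(1)] cpos that H(1) unfolding tot by simp
  ultimately show ?thesis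
    by (intro stage2_NE_intro[OF R \<gamma>]) force+
qed

lemma stage2_NE_exists:
  assumes "N \<ge> 2" "R > 0" "\<gamma> \<ge> 0" "\<forall>i\<in>{1..N}. c i > 0"
  shows "\<exists>h. stage2_NE N R \<gamma> c h"
  using equilibrium_share_sum_root[OF assms] stage2_NE_of_share_sum[OF assms(2-4)] by blast

lemma stage2_NE_The:
  assumes "N \<ge> 2" "R > 0" "\<gamma> \<ge> 0" "\<forall>i\<in>{1..N}. c i > 0"
  shows "stage2_NE N R \<gamma> c (THE h. stage2_NE N R \<gamma> c h)"
proof -
  have "\<exists>!h. stage2_NE N R \<gamma> c h"
    using stage2_NE_exists[OF assms] stage2_NE_unique[OF _ _ assms(2,3) _ assms(4)] assms(1)
    by (metis Suc_1 Suc_leD)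
  then show ?thesis by (rule theI')
qed

lemma stage2_NE_active_prefix:
  assumes NE: "stage2_NE N R \<gamma> c h" and R: "R > 0" and \<gamma>: "\<gamma> \<ge> 0" and "N \<ge> 1"
    and cpos: "\<forall>i\<in>{1..N}. c i > 0" and active: "{i\<in>{1..N}. h i > 0} = {1..n}"
  shows "2 \<le> n" "n \<le> N"
    and "\<forall>i\<in>{1..n}. h i > 0 \<and> h i * (R + \<gamma> * (totH N h)\<^sup>2) = R * totH N h - c i * (totH N h)\<^sup>2"
    and "\<gamma> * (totH N h)\<^sup>2 + (\<Sum>i=1..n. c i) * totH N h = (real n - 1) * R"
proof -
  let ?H = "totH N h"
  have H: "?H > 0" using stage2_NE_total_pos[OF assms(1-5)] .
  have sub: "{1..n} \<subseteq> {1..N}" using active by blast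
  show foc: "\<forall>i\<in>{1..n}. h i > 0 \<and> h i * (R + \<gamma> * ?H\<^sup>2) = R * ?H - c i * ?H\<^sup>2"
    using stage2_NE_foc[OF NE R \<gamma>] active cpos by blast
  have "h i = 0" if "i \<in> {1..N} - {1..n}" for i
    using NE active that unfolding stage2_NE_def by (metis (no_types, lifting) DiffE mem_Collect_eq
      order.not_eq_order_implies_strict)
  then have "?H = (\<Sum>i=1..n. h i)"
    unfolding totH_def using sub by (intro sum.mono_neutral_right) auto
  then have "?H * (R + \<gamma> * ?H\<^sup>2) = (\<Sum>i=1..n. h i * (R + \<gamma> * ?H\<^sup>2))"
    by (simp add: sum_distrib_right)
  also have "\<dots> = (\<Sum>i=1..n. R * ?H - c i * ?H\<^sup>2)"
    using foc by (intro sum.cong) auto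
  also have "\<dots> = real n * R * ?H - (\<Sum>i=1..n. c i) * ?H\<^sup>2"
    by (simp add: sum_subtractf sum_distrib_right)
  finally have "?H * (\<gamma> * ?H\<^sup>2 + (\<Sum>i=1..n. c i) * ?H) = ?H * ((real n - 1) * R)"
    by (simp add: algebra_simps power2_eq_square)
  then show agg: "\<gamma> * ?H\<^sup>2 + (\<Sum>i=1..n. c i) * ?H = (real n - 1) * R"
    using H by simp
  have "n \<noteq> 0" using \<open>?H = (\<Sum>i=1..n. h i)\<close> H by (cases "n = 0") auto
  then have "(\<Sum>i=1..n. c i) > 0" using cpos sub by (intro sum_pos) auto
  then have "(real n - 1) * R > 0"
    unfolding agg[symmetric] using H \<gamma> by (simp add: add_nonneg_pos)
  then show "2 \<le> n" using R by (simp add: zero_less_mult_iff)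
  then show "n \<le> N" using sub by auto
qed

section \<open>First-order approximations\<close>

definition first_order_approx ::
    "'a filter \<Rightarrow> ('a \<Rightarrow> real) \<Rightarrow> ('a \<Rightarrow> real) \<Rightarrow> real \<Rightarrow> ('a \<Rightarrow> real) \<Rightarrow> bool"
  where "first_order_approx F e f c L \<longleftrightarrow>
    L \<in> O[F](e) \<and> (\<lambda>x. f x - c - L x) \<in> O[F](\<lambda>x. (e x)\<^sup>2)"

lemma bigo_mult_bigo_1:
  fixes f g h :: "'a \<Rightarrow> real"
  assumes "f \<in> O[F](h)" "g \<in> O[F](\<lambda>_. 1)"
  shows "(\<lambda>x. f x * g x) \<in> O[F](h)"
  using landau_o.big.mult[OF assms] by simp

lemma bigo_square_mult:
  fixes f g e :: "'a \<Rightarrow> real"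
  assumes "f \<in> O[F](e)" "g \<in> O[F](e)"
  shows "(\<lambda>x. f x * g x) \<in> O[F](\<lambda>x. (e x)\<^sup>2)"
  using landau_o.big.mult[OF assms] by (simp add: power2_eq_square)

lemma bigo_square_imp_bigo:
  fixes f e :: "'a \<Rightarrow> real"
  assumes "f \<in> O[F](\<lambda>x. (e x)\<^sup>2)" "e \<in> O[F](\<lambda>_. 1)"
  shows "f \<in> O[F](e)"
proof -
  have "(\<lambda>x. (e x)\<^sup>2) \<in> O[F](e)"
    using landau_o.big.mult[OF landau_o.big_refl assms(2), of e] by (simp add: power2_eq_square)
  with assms(1) show ?thesis by (rule landau_o.big_trans)
qed

lemma bigo_1_inverse:
  fixes g :: "'a \<Rightarrow> real"
  assumes "m > 0" "\<forall>\<^sub>F x in F. m \<le> \<bar>g x\<bar>"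
  shows "(\<lambda>x. 1 / g x) \<in> O[F](\<lambda>_. 1)"
proof (rule bigoI[of _ "1 / m"])
  show "\<forall>\<^sub>F x in F. norm (1 / g x) \<le> 1 / m * norm (1::real)"
    using assms(2)
  proof eventually_elim
    case (elim x)
    then have "1 / \<bar>g x\<bar> \<le> 1 / m" using assms(1) by (intro divide_left_mono) auto
    then show ?case by simp
  qed
qed

lemma first_order_approx_const: "first_order_approx F e (\<lambda>_. c) c (\<lambda>_. 0)"
  unfolding first_order_approx_def by simp

lemma first_order_approx_linear: "L \<in> O[F](e) \<Longrightarrow> first_order_approx F e L 0 L"
  unfolding first_order_approx_def by simp

lemma first_order_approx_add:
  assumes "first_order_approx F e f a Lf" "first_order_approx F e g b Lg"
  shows "first_order_approx F e (\<lambda>x. f x + g x) (a + b) (\<lambda>x. Lf x + Lg x)"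
proof -
  have "Lf \<in> O[F](e)" "(\<lambda>x. f x - a - Lf x) \<in> O[F](\<lambda>x. (e x)\<^sup>2)"
    "Lg \<in> O[F](e)" "(\<lambda>x. g x - b - Lg x) \<in> O[F](\<lambda>x. (e x)\<^sup>2)"
    using assms unfolding first_order_approx_def by auto
  then have "(\<lambda>x. (f x - a - Lf x) + (g x - b - Lg x)) \<in> O[F](\<lambda>x. (e x)\<^sup>2)"
    "(\<lambda>x. Lf x + Lg x) \<in> O[F](e)"
    using sum_in_bigo(1) by blast+
  then show ?thesis unfolding first_order_approx_def by (simp add: algebra_simps)
qed

lemma first_order_approx_diff:
  assumes "first_order_approx F e f a Lf" "first_order_approx F e g b Lg"
  shows "first_order_approx F e (\<lambda>x. f x - g x) (a - b) (\<lambda>x. Lf x - Lg x)"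
proof -
  have "Lf \<in> O[F](e)" "(\<lambda>x. f x - a - Lf x) \<in> O[F](\<lambda>x. (e x)\<^sup>2)"
    "Lg \<in> O[F](e)" "(\<lambda>x. g x - b - Lg x) \<in> O[F](\<lambda>x. (e x)\<^sup>2)"
    using assms unfolding first_order_approx_def by auto
  then have "(\<lambda>x. (f x - a - Lf x) - (g x - b - Lg x)) \<in> O[F](\<lambda>x. (e x)\<^sup>2)"
    "(\<lambda>x. Lf x - Lg x) \<in> O[F](e)"
    using sum_in_bigo(2) by blast+
  then show ?thesis unfolding first_order_approx_def by (simp add: algebra_simps)
qed

lemma first_order_approx_cong:
  assumes "first_order_approx F e f c L"
    and "\<forall>\<^sub>F x in F. f x = f' x" "\<forall>\<^sub>F x in F. L x = L' x" "c = c'"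
  shows "first_order_approx F e f' c' L'"
proof -
  have "\<forall>\<^sub>F x in F. f x - c - L x = f' x - c - L' x"
    using assms(2,3) by eventually_elim simp
  from landau_o.big.in_cong[OF this] landau_o.big.in_cong[OF assms(3)] assms(1)
  show ?thesis unfolding first_order_approx_def \<open>c = c'\<close>[symmetric] by blast
qed

lemma first_order_approx_remainder:
  assumes "first_order_approx F e f c L"
  shows "\<exists>C. \<forall>\<^sub>F x in F. \<bar>f x - c - L x\<bar> \<le> C * (e x)\<^sup>2"
proof -
  obtain C where "\<forall>\<^sub>F x in F. norm (f x - c - L x) \<le> C * norm ((e x)\<^sup>2)"
    using assms unfolding first_order_approx_def by (auto elim: landau_o.bigE)
  then show ?thesis by (auto elim!: eventually_mono)
qed

lemma first_order_approx_bigo: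
  assumes "first_order_approx F e f c L" "e \<in> O[F](\<lambda>_. 1)"
  shows "(\<lambda>x. f x - c) \<in> O[F](e)"
proof -
  have "(\<lambda>x. f x - c - L x) \<in> O[F](e)" "L \<in> O[F](e)"
    using assms bigo_square_imp_bigo unfolding first_order_approx_def by blast+
  then have "(\<lambda>x. (f x - c - L x) + L x) \<in> O[F](e)" by (rule sum_in_bigo(1))
  then show ?thesis by simp
qed

lemma first_order_approx_mult:
  assumes f: "first_order_approx F e f a Lf" and g: "first_order_approx F e g b Lg"
    and e: "e \<in> O[F](\<lambda>_. 1)"
  shows "first_order_approx F e (\<lambda>x. f x * g x) (a * b) (\<lambda>x. a * Lg x + b * Lf x)"
proof -
  have g_b: "(\<lambda>x. g x - b) \<in> O[F](e)" using first_order_approx_bigo[OF g e] .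
  have "(\<lambda>x. (g x - b) + b) \<in> O[F](\<lambda>_. 1)"
    using landau_o.big_trans[OF g_b e] by (rule sum_in_bigo(1)) simp
  then have g1: "g \<in> O[F](\<lambda>_. 1)" by (simp only: diff_add_cancel)
  have "(\<lambda>x. (f x - a - Lf x) * g x) \<in> O[F](\<lambda>x. (e x)\<^sup>2)"
    by (rule bigo_mult_bigo_1[OF _ g1]) (use f in \<open>simp add: first_order_approx_def\<close>)
  moreover have "(\<lambda>x. Lf x * (g x - b)) \<in> O[F](\<lambda>x. (e x)\<^sup>2)"
    by (rule bigo_square_mult[OF _ g_b]) (use f in \<open>simp add: first_order_approx_def\<close>)
  moreover have "(\<lambda>x. a * (g x - b - Lg x)) \<in> O[F](\<lambda>x. (e x)\<^sup>2)"
    using g unfolding first_order_approx_def by simp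
  ultimately have "(\<lambda>x. (f x - a - Lf x) * g x + Lf x * (g x - b) + a * (g x - b - Lg x))
      \<in> O[F](\<lambda>x. (e x)\<^sup>2)"
    by (intro sum_in_bigo(1))
  moreover have "(\<lambda>x. a * Lg x + b * Lf x) \<in> O[F](e)"
    using f g unfolding first_order_approx_def by (intro sum_in_bigo) auto
  moreover have "(\<lambda>x. (f x - a - Lf x) * g x + Lf x * (g x - b) + a * (g x - b - Lg x))
      = (\<lambda>x. f x * g x - a * b - (a * Lg x + b * Lf x))"
    by (rule ext) (simp add: algebra_simps)
  ultimately show ?thesis unfolding first_order_approx_def by simp
qed

lemma first_order_approx_inverse:
  assumes g: "first_order_approx F e g b Lg" and e: "e \<in> O[F](\<lambda>_. 1)"
    and "b \<noteq> 0" "m > 0" and away: "\<forall>\<^sub>F x in F. m \<le> \<bar>g x\<bar>"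
  shows "first_order_approx F e (\<lambda>x. 1 / g x) (1 / b) (\<lambda>x. - Lg x / b\<^sup>2)"
proof -
  have inv: "(\<lambda>x. 1 / g x) \<in> O[F](\<lambda>_. 1)" using bigo_1_inverse[OF assms(4,5)] .
  have g_b: "(\<lambda>x. g x - b) \<in> O[F](e)" using first_order_approx_bigo[OF g e] .
  have "(\<lambda>x. (g x - b - Lg x) * (1 / g x)) \<in> O[F](\<lambda>x. (e x)\<^sup>2)"
    by (rule bigo_mult_bigo_1[OF _ inv]) (use g in \<open>simp add: first_order_approx_def\<close>)
  then have "(\<lambda>x. (g x - b - Lg x) * (1 / g x) * (- 1 / b)) \<in> O[F](\<lambda>x. (e x)\<^sup>2)"
    by (rule bigo_mult_bigo_1[OF _ bigo_const])
  moreover have "(\<lambda>x. Lg x * (g x - b) * (1 / g x)) \<in> O[F](\<lambda>x. (e x)\<^sup>2)"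
    by (rule bigo_mult_bigo_1[OF bigo_square_mult[OF _ g_b] inv])
      (use g in \<open>simp add: first_order_approx_def\<close>)
  then have "(\<lambda>x. Lg x * (g x - b) * (1 / g x) * (1 / b\<^sup>2)) \<in> O[F](\<lambda>x. (e x)\<^sup>2)"
    by (rule bigo_mult_bigo_1[OF _ bigo_const])
  ultimately have rest: "(\<lambda>x. (g x - b - Lg x) * (1 / g x) * (- 1 / b)
      + Lg x * (g x - b) * (1 / g x) * (1 / b\<^sup>2)) \<in> O[F](\<lambda>x. (e x)\<^sup>2)"
    by (rule sum_in_bigo(1))
  have "\<forall>\<^sub>F x in F. (g x - b - Lg x) * (1 / g x) * (- 1 / b)
      + Lg x * (g x - b) * (1 / g x) * (1 / b\<^sup>2) = 1 / g x - 1 / b - - Lg x / b\<^sup>2"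
    using away
  proof eventually_elim
    case (elim x)
    then have "g x \<noteq> 0" using \<open>m > 0\<close> by auto
    then show ?case
      using \<open>b \<noteq> 0\<close> by (simp add: divide_simps power2_eq_square) (simp add: algebra_simps)
  qed
  from landau_o.big.in_cong[OF this] rest
  have "(\<lambda>x. 1 / g x - 1 / b - - Lg x / b\<^sup>2) \<in> O[F](\<lambda>x. (e x)\<^sup>2)" by blast
  moreover have "(\<lambda>x. - Lg x / b\<^sup>2) \<in> O[F](e)"
    using g \<open>b \<noteq> 0\<close> unfolding first_order_approx_def by simp
  ultimately show ?thesis unfolding first_order_approx_def by blast
qed

lemma first_order_approx_divide:
  assumes f: "first_order_approx F e f a Lf" and g: "first_order_approx F e g b Lg"
    and e: "e \<in> O[F](\<lambda>_. 1)" and "b \<noteq> 0" "m > 0" "\<forall>\<^sub>F x in F. m \<le> \<bar>g x\<bar>"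
  shows "first_order_approx F e (\<lambda>x. f x / g x) (a / b) (\<lambda>x. Lf x / b - a * Lg x / b\<^sup>2)"
  using first_order_approx_mult[OF f first_order_approx_inverse[OF g e assms(4-6)] e]
  by (rule first_order_approx_cong) (simp_all add: field_simps)

section \<open>Expansions around the baseline equilibrium\<close>

lemma aggregate_root_shift:
  fixes \<gamma> c e s H H0 :: real
  assumes "\<gamma> \<ge> 0" "c > 0" "H0 > 0" "H > 0" "0 \<le> e" "e \<le> c / 2"
    and "\<gamma> * H0\<^sup>2 + c * H0 = s" "\<gamma> * H\<^sup>2 + (c - e) * H = s"
  shows "(H - H0) * (\<gamma> * (H + H0) + c - e) = e * H0" "c / 2 \<le> \<gamma> * (H + H0) + c - e"
    and "0 \<le> H - H0" "H - H0 \<le> 2 * H0 / c * e"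
proof -
  define D where "D = \<gamma> * (H + H0) + c - e"
  show eq: "(H - H0) * (\<gamma> * (H + H0) + c - e) = e * H0"
    using assms(7,8) by (simp add: algebra_simps power2_eq_square)
  have "\<gamma> * (H + H0) \<ge> 0" using assms by simp
  then show D: "c / 2 \<le> \<gamma> * (H + H0) + c - e" using assms(6) by linarith
  then have \<delta>: "H - H0 = e * H0 / D" using eq assms(2) unfolding D_def by (simp add: eq_divide_eq)
  show "0 \<le> H - H0" unfolding \<delta> using D assms unfolding D_def by simp
  have "e * H0 / D \<le> e * H0 / (c / 2)"
    using D assms unfolding D_def by (intro divide_left_mono) auto
  then show "H - H0 \<le> 2 * H0 / c * e" unfolding \<delta> by (simp add: field_simps)
qed

lemma total_hashrate_first_order_approx:
  fixes H e :: "'a \<Rightarrow> real"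
  assumes "\<gamma> \<ge> 0" "c > 0" "H0 > 0"
    and agg0: "\<gamma> * H0\<^sup>2 + c * H0 = s"
    and agg: "\<forall>\<^sub>F x in F. \<gamma> * (H x)\<^sup>2 + (c - e x) * H x = s \<and> 0 < H x \<and> 0 \<le> e x \<and> e x \<le> c / 2"
  shows "\<forall>\<^sub>F x in F. H0 \<le> H x"
    and "first_order_approx F e H H0 (\<lambda>x. e x * H0 / (c + 2 * \<gamma> * H0))"
proof -
  define D where "D x = \<gamma> * (H x + H0) + c - e x" for x
  define D0 where "D0 = c + 2 * \<gamma> * H0"
  have D0: "D0 > 0" unfolding D0_def using assms by (simp add: add_pos_nonneg)
  have ev: "\<forall>\<^sub>F x in F. (H x - H0) * D x = e x * H0 \<and> c / 2 \<le> D x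
      \<and> 0 \<le> H x - H0 \<and> H x - H0 \<le> 2 * H0 / c * e x \<and> 0 \<le> e x"
    using agg
    by eventually_elim (use aggregate_root_shift[OF assms(1-3) _ _ _ agg0] in \<open>auto simp: D_def\<close>)
  then show "\<forall>\<^sub>F x in F. H0 \<le> H x" by eventually_elim simp
  have \<delta>: "(\<lambda>x. H x - H0) \<in> O[F](e)"
    by (rule bigoI[of _ "2 * H0 / c"]) (use ev in \<open>eventually_elim, auto\<close>)
  have "(\<lambda>x. e x - \<gamma> * (H x - H0)) \<in> O[F](e)"
    using \<delta> by (intro sum_in_bigo(2)) simp_all
  then have rest: "(\<lambda>x. e x * (e x - \<gamma> * (H x - H0)) * (H0 / D0) * (1 / D x))
      \<in> O[F](\<lambda>x. (e x)\<^sup>2)"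
    using \<open>c > 0\<close> ev
    by (intro bigo_mult_bigo_1 bigo_square_mult bigo_1_inverse[of "c / 2"] bigo_const)
      (auto elim!: eventually_mono)
  have "\<forall>\<^sub>F x in F. e x * (e x - \<gamma> * (H x - H0)) * (H0 / D0) * (1 / D x)
      = H x - H0 - e x * H0 / D0"
    using ev
  proof eventually_elim
    case (elim x)
    then have "D x \<noteq> 0" "H x - H0 = e x * H0 / D x" using \<open>c > 0\<close> by (auto simp: eq_divide_eq)
    then have "H x - H0 - e x * H0 / D0 = e x * H0 * (D0 - D x) / (D x * D0)"
      using D0 by (simp add: field_simps)
    also have "D0 - D x = e x - \<gamma> * (H x - H0)" unfolding D0_def D_def by (simp add: algebra_simps)
    finally show ?case by (simp add: ac_simps)
  qed
  from landau_o.big.in_cong[OF this] rest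
  have "(\<lambda>x. H x - H0 - e x * H0 / D0) \<in> O[F](\<lambda>x. (e x)\<^sup>2)" by blast
  moreover have "(\<lambda>x. e x * H0 / D0) \<in> O[F](e)" using D0 \<open>H0 > 0\<close> by simp
  ultimately show "first_order_approx F e H H0 (\<lambda>x. e x * H0 / (c + 2 * \<gamma> * H0))"
    unfolding first_order_approx_def D0_def by simp
qed

lemma cross_coefficient_eq:
  fixes R \<gamma> c C h0 H0 :: real
  defines "am \<equiv> h0 / (C + 2 * \<gamma> * H0) *
             (1 - H0\<^sup>2 / (R + \<gamma> * H0\<^sup>2) * ((c + 2 * \<gamma> * h0) / h0))"
  assumes "h0 \<noteq> 0" "R + \<gamma> * H0\<^sup>2 \<noteq> 0" "C + 2 * \<gamma> * H0 \<noteq> 0"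
    and foc0: "h0 * (R + \<gamma> * H0\<^sup>2) = R * H0 - c * H0\<^sup>2"
  shows "am = H0 * (R - 2 * (c + \<gamma> * h0) * H0) / ((C + 2 * \<gamma> * H0) * (R + \<gamma> * H0\<^sup>2))"
    and "am = R * (2 * h0 - H0) / ((C + 2 * \<gamma> * H0) * (R + \<gamma> * H0\<^sup>2))"
proof -
  have "h0 / D0 * (1 - H0\<^sup>2 / DR0 * ((c + 2 * \<gamma> * h0) / h0))
      = (h0 * DR0 - H0\<^sup>2 * (c + 2 * \<gamma> * h0)) / (D0 * DR0)" if "D0 \<noteq> 0" "DR0 \<noteq> 0" for D0 DR0
    using that assms(2) by (simp add: field_simps)
  then have "am = (h0 * (R + \<gamma> * H0\<^sup>2) - H0\<^sup>2 * (c + 2 * \<gamma> * h0))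
      / ((C + 2 * \<gamma> * H0) * (R + \<gamma> * H0\<^sup>2))"
    unfolding am_def using assms(3,4) by simp
  moreover have "h0 * (R + \<gamma> * H0\<^sup>2) - H0\<^sup>2 * (c + 2 * \<gamma> * h0) = H0 * (R - 2 * (c + \<gamma> * h0) * H0)"
    "h0 * (R + \<gamma> * H0\<^sup>2) - H0\<^sup>2 * (c + 2 * \<gamma> * h0) = R * (2 * h0 - H0)"
    using foc0 by (simp_all add: algebra_simps power2_eq_square)
  ultimately show "am = H0 * (R - 2 * (c + \<gamma> * h0) * H0) / ((C + 2 * \<gamma> * H0) * (R + \<gamma> * H0\<^sup>2))"
    "am = R * (2 * h0 - H0) / ((C + 2 * \<gamma> * H0) * (R + \<gamma> * H0\<^sup>2))"
    by simp_all
qed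

lemma foc_solution_first_order_approx:
  fixes R \<gamma> c h0 H0 :: real and H H1 h I e :: "'a \<Rightarrow> real"
  assumes "R > 0" "\<gamma> \<ge> 0"
    and foc0: "h0 * (R + \<gamma> * H0\<^sup>2) = R * H0 - c * H0\<^sup>2"
    and H: "first_order_approx F e H H0 H1" and I: "I \<in> O[F](e)" and e: "e \<in> O[F](\<lambda>_. 1)"
    and foc: "\<forall>\<^sub>F x in F. h x * (R + \<gamma> * (H x)\<^sup>2) = R * H x - (c - I x) * (H x)\<^sup>2"
  shows "first_order_approx F e h h0
    (\<lambda>x. ((R - 2 * (c + \<gamma> * h0) * H0) * H1 x + H0\<^sup>2 * I x) / (R + \<gamma> * H0\<^sup>2))"
proof -
  define DR0 where "DR0 = R + \<gamma> * H0\<^sup>2"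
  have DR0: "DR0 > 0" unfolding DR0_def using assms by (simp add: add_pos_nonneg)
  have sq: "first_order_approx F e (\<lambda>x. H x * H x) (H0 * H0) (\<lambda>x. H0 * H1 x + H0 * H1 x)"
    using first_order_approx_mult[OF H H e] .
  have num: "first_order_approx F e (\<lambda>x. R * H x - (c - I x) * (H x)\<^sup>2)
      (h0 * DR0) (\<lambda>x. (R - 2 * c * H0) * H1 x + H0\<^sup>2 * I x)"
    using first_order_approx_diff
        [OF first_order_approx_mult[OF first_order_approx_const[where c = R] H e]
        first_order_approx_mult[OF first_order_approx_diff[OF first_order_approx_const[where c = c]
            first_order_approx_linear[OF I]] sq e]]
    by (rule first_order_approx_cong)
      (use foc0 in \<open>simp_all add: DR0_def algebra_simps power2_eq_square\<close>)
  have den: "first_order_approx F e (\<lambda>x. R + \<gamma> * (H x)\<^sup>2) DR0 (\<lambda>x. 2 * \<gamma> * H0 * H1 x)"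
    using first_order_approx_add[OF first_order_approx_const[where c = R]
        first_order_approx_mult[OF first_order_approx_const[where c = \<gamma>] sq e]]
    by (rule first_order_approx_cong) (simp_all add: DR0_def power2_eq_square)
  have "\<forall>\<^sub>F x in F. R \<le> \<bar>R + \<gamma> * (H x)\<^sup>2\<bar>" using assms by simp
  from first_order_approx_divide[OF num den e _ \<open>R > 0\<close> this] DR0
  have "first_order_approx F e (\<lambda>x. (R * H x - (c - I x) * (H x)\<^sup>2) / (R + \<gamma> * (H x)\<^sup>2)) h0
     (\<lambda>x. ((R - 2 * c * H0) * H1 x + H0\<^sup>2 * I x) / DR0 - h0 * DR0 * (2 * \<gamma> * H0 * H1 x) / DR0\<^sup>2)"
    by simp
  then show ?thesis
  proof (rule first_order_approx_cong)
    show "\<forall>\<^sub>F x in F. (R * H x - (c - I x) * (H x)\<^sup>2) / (R + \<gamma> * (H x)\<^sup>2) = h x"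
      using foc
    proof eventually_elim
      case (elim x)
      have "R + \<gamma> * (H x)\<^sup>2 > 0" using assms by (simp add: add_pos_nonneg)
      then show ?case using elim by (simp add: field_simps)
    qed
    show "\<forall>\<^sub>F x in F. ((R - 2 * c * H0) * H1 x + H0\<^sup>2 * I x) / DR0
        - h0 * DR0 * (2 * \<gamma> * H0 * H1 x) / DR0\<^sup>2
        = ((R - 2 * (c + \<gamma> * h0) * H0) * H1 x + H0\<^sup>2 * I x) / (R + \<gamma> * H0\<^sup>2)"
      using DR0 unfolding DR0_def[symmetric] by (simp add: field_simps power2_eq_square)
  qed simp
qed

lemma miner_hashrate_first_order_approx:
  fixes R \<gamma> c C h0 H0 :: real and H h I e :: "'a \<Rightarrow> real"
  defines "am \<equiv> h0 / (C + 2 * \<gamma> * H0) *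
             (1 - H0\<^sup>2 / (R + \<gamma> * H0\<^sup>2) * ((c + 2 * \<gamma> * h0) / h0))"
  assumes "R > 0" "\<gamma> \<ge> 0" "h0 > 0" "C + 2 * \<gamma> * H0 \<noteq> 0"
    and foc0: "h0 * (R + \<gamma> * H0\<^sup>2) = R * H0 - c * H0\<^sup>2"
    and H: "first_order_approx F e H H0 (\<lambda>x. e x * H0 / (C + 2 * \<gamma> * H0))"
    and I: "I \<in> O[F](e)" and e: "e \<in> O[F](\<lambda>_. 1)"
    and foc: "\<forall>\<^sub>F x in F. h x * (R + \<gamma> * (H x)\<^sup>2) = R * H x - (c - I x) * (H x)\<^sup>2"
  shows "first_order_approx F e h h0 (\<lambda>x. (H0\<^sup>2 / (R + \<gamma> * H0\<^sup>2) + am) * I x + am * (e x - I x))"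
proof -
  define D0 where "D0 = C + 2 * \<gamma> * H0"
  define DR0 where "DR0 = R + \<gamma> * H0\<^sup>2"
  have DR0: "DR0 > 0" unfolding DR0_def using assms by (simp add: add_pos_nonneg)
  have D0: "D0 \<noteq> 0" unfolding D0_def using assms by simp
  have am: "am = H0 * (R - 2 * (c + \<gamma> * h0) * H0) / (D0 * DR0)"
    unfolding am_def D0_def DR0_def using cross_coefficient_eq(1)[OF _ _ _ foc0] assms DR0
    unfolding DR0_def by simp
  from foc_solution_first_order_approx[OF assms(2,3) foc0 H I e foc]
  show ?thesis
  proof (rule first_order_approx_cong)
    show "\<forall>\<^sub>F x in F. ((R - 2 * (c + \<gamma> * h0) * H0) * (e x * H0 / (C + 2 * \<gamma> * H0)) + H0\<^sup>2 * I x)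
        / (R + \<gamma> * H0\<^sup>2) = (H0\<^sup>2 / (R + \<gamma> * H0\<^sup>2) + am) * I x + am * (e x - I x)"
      using DR0 D0 unfolding am D0_def[symmetric] DR0_def[symmetric]
      by (simp add: field_simps power2_eq_square)
  qed simp_all
qed

lemma miner_share_first_order_approx:
  fixes R \<gamma> c C h0 H0 :: real and H h I e :: "'a \<Rightarrow> real"
  defines "am \<equiv> h0 / (C + 2 * \<gamma> * H0) *
             (1 - H0\<^sup>2 / (R + \<gamma> * H0\<^sup>2) * ((c + 2 * \<gamma> * h0) / h0))"
    and "\<alpha> \<equiv> (c + 2 * \<gamma> * h0) / (C + 2 * \<gamma> * H0)"
  assumes "R > 0" "\<gamma> \<ge> 0" "h0 \<noteq> 0" "H0 > 0" "C + 2 * \<gamma> * H0 \<noteq> 0"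
    and h: "first_order_approx F e h h0 (\<lambda>x. (H0\<^sup>2 / (R + \<gamma> * H0\<^sup>2) + am) * I x + am * (e x - I x))"
    and H: "first_order_approx F e H H0 (\<lambda>x. e x * H0 / (C + 2 * \<gamma> * H0))"
    and e: "e \<in> O[F](\<lambda>_. 1)" and above: "\<forall>\<^sub>F x in F. H0 \<le> H x"
  shows "first_order_approx F e (\<lambda>x. h x / H x) (h0 / H0)
    (\<lambda>x. H0 / (R + \<gamma> * H0\<^sup>2) * ((1 - \<alpha>) * I x - \<alpha> * (e x - I x)))"
proof -
  define D0 where "D0 = C + 2 * \<gamma> * H0"
  define DR0 where "DR0 = R + \<gamma> * H0\<^sup>2"
  have DR0: "DR0 > 0" unfolding DR0_def using assms by (simp add: add_pos_nonneg)
  have D0: "D0 \<noteq> 0" unfolding D0_def using assms by simp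
  have am: "am = h0 / D0 - H0\<^sup>2 * (c + 2 * \<gamma> * h0) / (D0 * DR0)"
    unfolding am_def D0_def[symmetric] DR0_def[symmetric] using assms(5) D0 DR0
    by (simp add: field_simps)
  have "\<forall>\<^sub>F x in F. H0 \<le> \<bar>H x\<bar>" using above by eventually_elim simp
  from first_order_approx_divide[OF h H e _ \<open>H0 > 0\<close> this] \<open>H0 > 0\<close>
  have "first_order_approx F e (\<lambda>x. h x / H x) (h0 / H0)
     (\<lambda>x. ((H0\<^sup>2 / (R + \<gamma> * H0\<^sup>2) + am) * I x + am * (e x - I x)) / H0
       - h0 * (e x * H0 / (C + 2 * \<gamma> * H0)) / H0\<^sup>2)" by simp
  then show ?thesis
  proof (rule first_order_approx_cong)
    have "((H0\<^sup>2 / DR0 + am) * I x + am * (e x - I x)) / H0 - h0 * (e x * H0 / D0) / H0\<^sup>2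
        = H0 / DR0 * ((1 - \<alpha>) * I x - \<alpha> * (e x - I x))" for x
      using DR0 D0 \<open>H0 > 0\<close> unfolding am \<alpha>_def D0_def[symmetric]
      by (simp add: field_simps power2_eq_square)
    then show "\<forall>\<^sub>F x in F. ((H0\<^sup>2 / (R + \<gamma> * H0\<^sup>2) + am) * I x + am * (e x - I x)) / H0
        - h0 * (e x * H0 / (C + 2 * \<gamma> * H0)) / H0\<^sup>2
        = H0 / (R + \<gamma> * H0\<^sup>2) * ((1 - \<alpha>) * I x - \<alpha> * (e x - I x))"
      unfolding DR0_def D0_def by simp
  qed simp_all
qed

lemma active_coefficient_signs:
  fixes R \<gamma> c C h0 H0 :: real
  defines "am \<equiv> h0 / (C + 2 * \<gamma> * H0) *
             (1 - H0\<^sup>2 / (R + \<gamma> * H0\<^sup>2) * ((c + 2 * \<gamma> * h0) / h0))"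
    and "\<alpha> \<equiv> (c + 2 * \<gamma> * h0) / (C + 2 * \<gamma> * H0)"
  assumes "R > 0" "\<gamma> \<ge> 0" "H0 > 0" "h0 > 0" "0 < c" "c < C"
    and foc0: "h0 * (R + \<gamma> * H0\<^sup>2) = R * H0 - c * H0\<^sup>2"
  shows "H0\<^sup>2 / (R + \<gamma> * H0\<^sup>2) + am > 0" "am < 0 \<longleftrightarrow> h0 / H0 < 1 / 2" "0 < \<alpha>" "\<alpha> < 1"
proof -
  define D0 where "D0 = C + 2 * \<gamma> * H0"
  define DR0 where "DR0 = R + \<gamma> * H0\<^sup>2"
  have DR0: "DR0 > 0" unfolding DR0_def using assms by (simp add: add_pos_nonneg)
  have D0: "D0 > 0" unfolding D0_def using assms by (simp add: add_pos_nonneg)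
  have am: "am = R * (2 * h0 - H0) / (D0 * DR0)"
    using cross_coefficient_eq(2)[OF _ _ _ foc0] assms DR0 D0
    unfolding am_def D0_def DR0_def by simp
  have "h0 * DR0 = H0 * R - c * H0\<^sup>2" using foc0 unfolding DR0_def by (simp add: algebra_simps)
  also have "\<dots> < H0 * R" using assms by simp
  also have "\<dots> \<le> H0 * DR0" using assms unfolding DR0_def by (intro mult_left_mono) auto
  finally have h0_H0: "h0 < H0" using DR0 by simp
  show "am < 0 \<longleftrightarrow> h0 / H0 < 1 / 2"
    unfolding am using D0 DR0 assms by (simp add: divide_less_0_iff mult_less_0_iff field_simps)
  have "H0\<^sup>2 * D0 + R * (2 * h0 - H0) = H0\<^sup>2 * (C - c) + \<gamma> * H0\<^sup>2 * (2 * H0 - h0) + R * h0"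
    using foc0 unfolding D0_def by (simp add: algebra_simps power2_eq_square)
  also have "\<dots> > 0" using assms h0_H0 by (intro add_pos_nonneg add_nonneg_pos) auto
  finally show "H0\<^sup>2 / (R + \<gamma> * H0\<^sup>2) + am > 0"
    unfolding am DR0_def[symmetric] using D0 DR0 by (simp add: field_simps)
  show "0 < \<alpha>" unfolding \<alpha>_def D0_def[symmetric] using D0 assms by (simp add: add_pos_nonneg)
  have "\<gamma> * h0 \<le> \<gamma> * H0" using h0_H0 assms by (simp add: mult_left_mono)
  then show "\<alpha> < 1" unfolding \<alpha>_def D0_def[symmetric] using D0 assms by (simp add: D0_def)
qed

lemma investment_share_shift_strict_mono:
  fixes \<epsilon> c0 ci cj hi hj \<gamma> K0 D0 :: real
  assumes "\<epsilon> > 0" "ci < cj" "\<gamma> \<ge> 0" "hj \<le> hi" "0 \<le> K0" "K0 < D0"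
  shows "(ci - c0) * \<epsilon> - (ci + 2 * \<gamma> * hi) / D0 * (K0 * \<epsilon>)
       < (cj - c0) * \<epsilon> - (cj + 2 * \<gamma> * hj) / D0 * (K0 * \<epsilon>)"
proof -
  have "(cj - ci) * (D0 - K0) > 0" "2 * \<gamma> * (hi - hj) * K0 \<ge> 0" using assms by simp_all
  then have "(ci - c0) * D0 - (ci + 2 * \<gamma> * hi) * K0 < (cj - c0) * D0 - (cj + 2 * \<gamma> * hj) * K0"
    by (simp add: algebra_simps)
  then have "((ci - c0) * D0 - (ci + 2 * \<gamma> * hi) * K0) * (\<epsilon> / D0)
      < ((cj - c0) * D0 - (cj + 2 * \<gamma> * hj) * K0) * (\<epsilon> / D0)"
    using assms by (intro mult_strict_right_mono) auto
  then show ?thesis using assms by (simp add: field_simps)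
qed

section \<open>The mining game\<close>

lemma Ired_beta_star:
  assumes "1 \<le> \<eta>" "i \<in> {1..n}"
  shows "Ired ct \<eta> n i = (ct i - ct 0) / (2 * \<eta>)"
proof -
  have "min (1 / \<eta>) 1 = 1 / \<eta>" using assms by simp
  then show ?thesis
    unfolding Ired_def beta_star_def cost_def using assms
    by (simp add: field_simps power2_eq_square)
qed

lemma Ired_beta_star_outside: "i \<notin> {1..n} \<Longrightarrow> Ired ct \<eta> n i = 0"
  by (auto simp: Ired_def beta_star_def)

lemma eqm_zero_investment: "eqm ct \<eta> R \<gamma> K N A (\<lambda>_. 0) = (THE h. stage2_NE N R \<gamma> ct h)"
proof -
  have "is_NE ct \<eta> R \<gamma> K N A (\<lambda>_. 0) = stage2_NE N R \<gamma> ct"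
    using is_NE_iff_stage2_NE[of N A "\<lambda>_. 0"] by (simp add: cost_def fun_eq_iff)
  then show ?thesis unfolding eqm_def by simp
qed

lemma eqm_beta_star:
  "eqm ct \<eta> R \<gamma> K N {1..n} (beta_star \<eta> n)
    = (THE h. stage2_NE N R \<gamma> (\<lambda>i. ct i - Ired ct \<eta> n i) h)"
proof -
  have "(\<lambda>i. cost ct \<eta> i (beta_star \<eta> n i)) = (\<lambda>i. ct i - Ired ct \<eta> n i)"
    by (simp add: Ired_def cost_def algebra_simps)
  moreover have "\<forall>i\<in>{1..N}. i \<in> {1..n} \<or> beta_star \<eta> n i \<le> 0"
    by (simp add: beta_star_def)
  ultimately show ?thesis unfolding eqm_def using is_NE_iff_stage2_NE by presburger
qed

locale mining_game =
  fixes ct :: "nat \<Rightarrow> real" and R \<gamma> K :: real and N n :: nat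
  assumes N: "N \<ge> 2"
    and ct1_pos: "0 < ct 1"
    and ct_mono: "\<forall>i. 1 \<le> i \<and> i < N \<longrightarrow> ct i \<le> ct (Suc i)"
    and ct0_pos: "0 < ct 0" and ct0_le_ct1: "ct 0 \<le> ct 1"
    and R: "R > 0" and \<gamma>: "\<gamma> \<ge> 0"
    and active_eventually: "\<forall>\<^sub>F \<eta> in at_top. active ct \<eta> R \<gamma> K N (beta_star \<eta> n) = {1..n}
                                              \<and> active ct \<eta> R \<gamma> K N (\<lambda>_. 0) = {1..n}"
begin

abbreviation "h0 \<equiv> hstar ct 1 R \<gamma> K N (\<lambda>_. 0)"
abbreviation "H0 \<equiv> totH N h0"
abbreviation "c0n \<equiv> \<Sum>j=1..n. ct j"
abbreviation "I \<eta> i \<equiv> Ired ct \<eta> n i"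
abbreviation "Ibar \<eta> \<equiv> \<Sum>j=1..n. I \<eta> j"
abbreviation "hb \<eta> \<equiv> hstar ct \<eta> R \<gamma> K N (beta_star \<eta> n)"
abbreviation "Hb \<eta> \<equiv> totH N (hb \<eta>)"
abbreviation "am i \<equiv> h0 i / (c0n + 2 * \<gamma> * H0) *
  (1 - H0\<^sup>2 / (R + \<gamma> * H0\<^sup>2) * ((ct i + 2 * \<gamma> * h0 i) / h0 i))"
abbreviation "ai i \<equiv> H0\<^sup>2 / (R + \<gamma> * H0\<^sup>2) + am i"
abbreviation "\<alpha>0 \<equiv> H0 / (R + \<gamma> * H0\<^sup>2)"
abbreviation "\<alpha> i \<equiv> (ct i + 2 * \<gamma> * h0 i) / (c0n + 2 * \<gamma> * H0)"
abbreviation "Q \<eta> i \<equiv> (1 - \<alpha> i) * I \<eta> i - \<alpha> i * (Ibar \<eta> - I \<eta> i)"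

lemma ct_bounds:
  assumes "i \<in> {1..N}"
  shows "0 < ct i" "ct 0 \<le> ct i"
proof -
  have "ct 1 \<le> ct i" using assms
  proof (induction i)
    case (Suc k)
    show ?case
    proof (cases "k = 0")
      case False
      then have "ct 1 \<le> ct k" "ct k \<le> ct (Suc k)" using Suc ct_mono by auto
      then show ?thesis by linarith
    qed simp
  qed simp
  then show "0 < ct i" "ct 0 \<le> ct i" using ct1_pos ct0_le_ct1 by auto
qed

lemma ct_pos: "\<forall>i\<in>{1..N}. 0 < ct i"
  using ct_bounds by blast

lemma hstar_zero_investment: "hstar ct \<eta> R \<gamma> K N (\<lambda>_. 0) = (THE h. stage2_NE N R \<gamma> ct h)"
  unfolding hstar_def eqm_zero_investment ..

lemma baseline_NE: "stage2_NE N R \<gamma> ct h0"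
  unfolding hstar_zero_investment using stage2_NE_The[OF N R \<gamma>] ct_bounds by simp

lemma baseline_active: "{i\<in>{1..N}. h0 i > 0} = {1..n}"
proof -
  obtain \<eta> where "active ct \<eta> R \<gamma> K N (\<lambda>_. 0) = {1..n}"
    using eventually_happens[OF active_eventually] by auto
  then show ?thesis unfolding active_def hstar_zero_investment .
qed

lemma Azero_eq: "Azero ct \<eta> R \<gamma> K N = {1..n}"
  using baseline_active unfolding Azero_def eqm_zero_investment hstar_zero_investment .

lemma baseline:
  shows "2 \<le> n" "n \<le> N"
    and "\<forall>i\<in>{1..n}. h0 i > 0 \<and> h0 i * (R + \<gamma> * H0\<^sup>2) = R * H0 - ct i * H0\<^sup>2"
    and "\<gamma> * H0\<^sup>2 + c0n * H0 = (real n - 1) * R"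
  using stage2_NE_active_prefix[OF baseline_NE R \<gamma> _ ct_pos baseline_active] N by simp_all


lemma c0n_pos: "c0n > 0"
  using baseline(1,2) ct_pos by (intro sum_pos) auto

lemma H0_pos: "H0 > 0"
  using stage2_NE_total_pos[OF baseline_NE R \<gamma> _ ct_pos] N by simp

lemma I_nonneg:
  assumes "1 \<le> \<eta>"
  shows "0 \<le> I \<eta> i"
proof (cases "i \<in> {1..n}")
  case True
  then have "ct 0 \<le> ct i" using ct_bounds baseline(2) by simp
  then show ?thesis using True assms by (simp add: Ired_beta_star)
qed (simp add: Ired_beta_star_outside)

lemma Ibar_nonneg: "1 \<le> \<eta> \<Longrightarrow> 0 \<le> Ibar \<eta>"
  using I_nonneg by (simp add: sum_nonneg)

lemma I_le_Ibar: "1 \<le> \<eta> \<Longrightarrow> i \<in> {1..n} \<Longrightarrow> I \<eta> i \<le> Ibar \<eta>"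
  using I_nonneg by (intro member_le_sum) auto

lemma Ibar_eq: "1 \<le> \<eta> \<Longrightarrow> Ibar \<eta> = (c0n - n * ct 0) / (2 * \<eta>)"
  by (simp add: Ired_beta_star sum_divide_distrib[symmetric] sum_subtractf)

lemma Ibar_le: "1 \<le> \<eta> \<Longrightarrow> Ibar \<eta> \<le> c0n / 2"
proof -
  assume "1 \<le> \<eta>"
  moreover have "0 \<le> (\<Sum>i=1..n. ct i - ct 0)"
    using ct_bounds baseline(2) by (intro sum_nonneg) auto
  then have "0 \<le> c0n - n * ct 0" by (simp add: sum_subtractf)
  ultimately have "(c0n - n * ct 0) / (2 * \<eta>) \<le> (c0n - n * ct 0) / 2"
    by (intro divide_left_mono) auto
  moreover have "(c0n - n * ct 0) / 2 \<le> c0n / 2" using ct0_pos by simp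
  ultimately show ?thesis unfolding Ibar_eq[OF \<open>1 \<le> \<eta>\<close>] by linarith
qed

lemma effective_cost_pos:
  assumes "1 \<le> \<eta>" "i \<in> {1..N}"
  shows "0 < ct i - I \<eta> i"
proof (cases "i \<in> {1..n}")
  case True
  have "(ct i - ct 0) / (2 * \<eta>) \<le> (ct i - ct 0) / 2"
    using ct_bounds[OF assms(2)] assms(1) by (intro divide_left_mono) auto
  moreover have "(ct i - ct 0) / 2 < ct i" using ct_bounds[OF assms(2)] ct0_pos by simp
  ultimately show ?thesis unfolding Ired_beta_star[OF assms(1) True] by linarith
qed (use ct_bounds[OF assms(2)] in \<open>simp add: Ired_beta_star_outside\<close>)

lemma invested_NE: "1 \<le> \<eta> \<Longrightarrow> stage2_NE N R \<gamma> (\<lambda>i. ct i - I \<eta> i) (hb \<eta>)"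
  unfolding hstar_def Azero_eq eqm_beta_star
  using stage2_NE_The[OF N R \<gamma>] effective_cost_pos by simp

lemma eventually_invested:
  "\<forall>\<^sub>F \<eta> in at_top. 0 < Hb \<eta>
     \<and> (\<forall>i\<in>{1..n}. hb \<eta> i * (R + \<gamma> * (Hb \<eta>)\<^sup>2) = R * Hb \<eta> - (ct i - I \<eta> i) * (Hb \<eta>)\<^sup>2)
     \<and> \<gamma> * (Hb \<eta>)\<^sup>2 + (c0n - Ibar \<eta>) * Hb \<eta> = (real n - 1) * R"
  using active_eventually eventually_ge_at_top[of 1]
proof eventually_elim
  case (elim \<eta>)
  then have "{i\<in>{1..N}. hb \<eta> i > 0} = {1..n}" by (simp add: active_def)
  note prefix = stage2_NE_active_prefix[OF invested_NE[OF elim(2)] R \<gamma> _ _ this]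
  have "(\<Sum>i=1..n. ct i - I \<eta> i) = c0n - Ibar \<eta>" by (simp add: sum_subtractf)
  then show ?case
    using prefix(3,4) stage2_NE_total_pos[OF invested_NE[OF elim(2)] R \<gamma>] N
      effective_cost_pos elim(2)
    by simp
qed

lemma Ibar_bigo_1: "Ibar \<in> O[at_top](\<lambda>_. 1)"
proof (rule bigoI[of _ "c0n / 2"])
  show "\<forall>\<^sub>F \<eta> in at_top. norm (Ibar \<eta>) \<le> c0n / 2 * norm (1::real)"
    using eventually_ge_at_top[of 1]
    by eventually_elim (use Ibar_nonneg Ibar_le in \<open>fastforce\<close>)
qed

lemma I_bigo_Ibar: "i \<in> {1..n} \<Longrightarrow> (\<lambda>\<eta>. I \<eta> i) \<in> O[at_top](Ibar)"
proof (rule bigoI[of _ 1])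
  assume "i \<in> {1..n}"
  show "\<forall>\<^sub>F \<eta> in at_top. norm (I \<eta> i) \<le> 1 * norm (Ibar \<eta>)"
    using eventually_ge_at_top[of 1]
    by eventually_elim (use I_nonneg Ibar_nonneg I_le_Ibar \<open>i \<in> {1..n}\<close> in \<open>fastforce\<close>)
qed

lemma total_hashrate_first_order:
  shows "\<forall>\<^sub>F \<eta> in at_top. H0 \<le> Hb \<eta>"
    and "first_order_approx at_top Ibar Hb H0 (\<lambda>\<eta>. Ibar \<eta> * H0 / (c0n + 2 * \<gamma> * H0))"
proof -
  have "\<forall>\<^sub>F \<eta> in at_top. \<gamma> * (Hb \<eta>)\<^sup>2 + (c0n - Ibar \<eta>) * Hb \<eta> = (real n - 1) * R
      \<and> 0 < Hb \<eta> \<and> 0 \<le> Ibar \<eta> \<and> Ibar \<eta> \<le> c0n / 2"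
    using eventually_invested eventually_ge_at_top[of 1]
    by eventually_elim (use Ibar_nonneg Ibar_le in \<open>fastforce\<close>)
  note agg = total_hashrate_first_order_approx[OF \<gamma> c0n_pos H0_pos baseline(4) this]
  show "\<forall>\<^sub>F \<eta> in at_top. H0 \<le> Hb \<eta>" using agg(1) .
  show "first_order_approx at_top Ibar Hb H0 (\<lambda>\<eta>. Ibar \<eta> * H0 / (c0n + 2 * \<gamma> * H0))"
    using agg(2) .
qed


lemma D0_pos: "c0n + 2 * \<gamma> * H0 > 0"
  using c0n_pos H0_pos \<gamma> by (simp add: add_pos_nonneg)

lemma ct_less_c0n:
  assumes "i \<in> {1..n}"
  shows "ct i < c0n"
proof -
  define j :: nat where "j = (if i = 1 then 2 else 1)"
  have j: "j \<in> {1..n} - {i}" using baseline(1) assms by (auto simp: j_def)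
  have pos: "\<forall>k\<in>{1..n}. 0 < ct k" using ct_pos baseline(2) by auto
  have "c0n = ct i + (\<Sum>k\<in>{1..n} - {i}. ct k)" using assms by (simp add: sum.remove)
  moreover have "ct j \<le> (\<Sum>k\<in>{1..n} - {i}. ct k)"
    using j pos by (intro member_le_sum) (auto intro: less_imp_le)
  ultimately show ?thesis using j pos by force
qed

lemma miner_hashrate_first_order:
  assumes i: "i \<in> {1..n}"
  shows "first_order_approx at_top Ibar (\<lambda>\<eta>. hb \<eta> i) (h0 i)
    (\<lambda>\<eta>. ai i * I \<eta> i + am i * (Ibar \<eta> - I \<eta> i))"
proof (rule miner_hashrate_first_order_approx
    [OF R \<gamma> _ _ _ total_hashrate_first_order(2) I_bigo_Ibar[OF i] Ibar_bigo_1])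
  show "h0 i > 0" "h0 i * (R + \<gamma> * H0\<^sup>2) = R * H0 - ct i * H0\<^sup>2"
    using baseline(3) i by auto
  show "c0n + 2 * \<gamma> * H0 \<noteq> 0" using D0_pos by simp
  show "\<forall>\<^sub>F \<eta> in at_top. hb \<eta> i * (R + \<gamma> * (Hb \<eta>)\<^sup>2) = R * Hb \<eta> - (ct i - I \<eta> i) * (Hb \<eta>)\<^sup>2"
    using eventually_invested by eventually_elim (use i in blast)
qed

lemma miner_hashrate_expansion:
  assumes "i \<in> {1..n}"
  shows "\<exists>C. \<forall>\<^sub>F \<eta> in at_top.
    \<bar>hb \<eta> i - h0 i - ai i * I \<eta> i - am i * (Ibar \<eta> - I \<eta> i)\<bar> \<le> C * (Ibar \<eta>)\<^sup>2"
  using first_order_approx_remainder[OF miner_hashrate_first_order[OF assms]]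
  by (simp add: diff_diff_eq add.assoc)

lemma miner_share_expansion:
  assumes i: "i \<in> {1..n}"
  shows "\<exists>C. \<forall>\<^sub>F \<eta> in at_top. \<bar>hb \<eta> i / Hb \<eta> - h0 i / H0 - \<alpha>0 * Q \<eta> i\<bar> \<le> C * (Ibar \<eta>)\<^sup>2"
proof -
  have "h0 i > 0" using baseline(3) i by auto
  then have "h0 i \<noteq> 0" by simp
  from miner_share_first_order_approx[OF R \<gamma> this H0_pos _ miner_hashrate_first_order[OF i]
      total_hashrate_first_order(2) Ibar_bigo_1 total_hashrate_first_order(1)] D0_pos
  show ?thesis by (auto dest: first_order_approx_remainder)
qed

lemma coefficient_signs:
  assumes i: "i \<in> {1..n}"
  shows "ai i > 0" "am i < 0 \<longleftrightarrow> h0 i / H0 < 1 / 2" "0 < \<alpha> i" "\<alpha> i < 1"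
proof -
  have "h0 i > 0" "h0 i * (R + \<gamma> * H0\<^sup>2) = R * H0 - ct i * H0\<^sup>2"
    using baseline(3) i by auto
  note signs = active_coefficient_signs[OF R \<gamma> H0_pos this(1) _ ct_less_c0n[OF i] this(2)]
  show "ai i > 0" "am i < 0 \<longleftrightarrow> h0 i / H0 < 1 / 2" "0 < \<alpha> i" "\<alpha> i < 1"
    using signs ct_pos baseline(2) i by auto
qed

lemma \<alpha>0_pos: "\<alpha>0 > 0"
  using H0_pos R \<gamma> by (simp add: add_pos_nonneg)

lemma baseline_hashrate_strict_antimono:
  assumes "i \<in> {1..n}" "j \<in> {1..n}" "ct i < ct j"
  shows "h0 j < h0 i"
proof -
  have "(h0 i - h0 j) * (R + \<gamma> * H0\<^sup>2) = (ct j - ct i) * H0\<^sup>2"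
    using baseline(3) assms(1,2) by (simp add: algebra_simps)
  moreover have "(ct j - ct i) * H0\<^sup>2 > 0" "R + \<gamma> * H0\<^sup>2 > 0"
    using assms(3) H0_pos R \<gamma> by (simp_all add: add_pos_nonneg)
  ultimately show ?thesis by (metis diff_gt_0_iff_gt zero_less_mult_pos2)
qed

lemma share_shift_strict_mono:
  assumes i: "i \<in> {1..n}" and j: "j \<in> {1..n}" and lt: "ct i < ct j"
  shows "\<forall>\<^sub>F \<eta> in at_top. Q \<eta> i < Q \<eta> j"
  using eventually_ge_at_top[of 1]
proof eventually_elim
  case (elim \<eta>)
  have Q: "Q \<eta> k = (ct k - ct 0) * (1 / (2 * \<eta>))
      - (ct k + 2 * \<gamma> * h0 k) / (c0n + 2 * \<gamma> * H0) * ((c0n - n * ct 0) * (1 / (2 * \<eta>)))"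
    if "k \<in> {1..n}" for k
  proof -
    have "Q \<eta> k = I \<eta> k - \<alpha> k * Ibar \<eta>"
      by (simp only: left_diff_distrib right_diff_distrib mult_1_left)
    then show ?thesis unfolding Ired_beta_star[OF elim that] Ibar_eq[OF elim] by simp
  qed
  have "0 \<le> (\<Sum>i=1..n. ct i - ct 0)"
    using ct_bounds baseline(2) by (intro sum_nonneg) auto
  then have "0 \<le> c0n - n * ct 0" by (simp add: sum_subtractf)
  moreover have "0 < real n * ct 0" "0 \<le> 2 * \<gamma> * H0"
    using ct0_pos baseline(1) H0_pos \<gamma> by simp_all
  then have "c0n - n * ct 0 < c0n + 2 * \<gamma> * H0" by linarith
  ultimately show ?case
    unfolding Q[OF i] Q[OF j] using elim lt \<gamma> baseline_hashrate_strict_antimono[OF i j lt]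
    by (intro investment_share_shift_strict_mono) auto
qed

end

theorem proposition5p3:
  fixes ct :: "nat \<Rightarrow> real" and R \<gamma> K :: real and N n :: nat
  assumes "N \<ge> 2"
    and "0 < ct 1"
    and "\<forall>i. 1 \<le> i \<and> i < N \<longrightarrow> ct i \<le> ct (Suc i)"
    and "0 < ct 0" and "ct 0 \<le> ct 1"
    and "R > 0" and "\<gamma> \<ge> 0" and "K > 0"
    and "\<forall>\<^sub>F \<eta> in at_top. active ct \<eta> R \<gamma> K N (beta_star \<eta> n) = {1..n}
                          \<and> active ct \<eta> R \<gamma> K N (\<lambda>_. 0) = {1..n}"
  shows
   "let h0 = hstar ct 1 R \<gamma> K N (\<lambda>_. 0);
        H0 = totH N h0;
        c0n = (\<Sum>j=1..n. ct j);
        I = (\<lambda>\<eta> i. Ired ct \<eta> n i);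
        Ibar = (\<lambda>\<eta>. \<Sum>j=1..n. I \<eta> j);
        Ibarm = (\<lambda>\<eta> i. Ibar \<eta> - I \<eta> i);
        am = (\<lambda>i. h0 i / (c0n + 2 * \<gamma> * H0) *
                 (1 - H0\<^sup>2 / (R + \<gamma> * H0\<^sup>2) * ((ct i + 2 * \<gamma> * h0 i) / h0 i)));
        ai = (\<lambda>i. H0\<^sup>2 / (R + \<gamma> * H0\<^sup>2) + am i);
        \<alpha>0 = H0 / (R + \<gamma> * H0\<^sup>2);
        \<alpha> = (\<lambda>i. (ct i + 2 * \<gamma> * h0 i) / (c0n + 2 * \<gamma> * H0));
        hb = (\<lambda>\<eta>. hstar ct \<eta> R \<gamma> K N (beta_star \<eta> n));
        Hb = (\<lambda>\<eta>. totH N (hb \<eta>));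
        Q = (\<lambda>\<eta> i. (1 - \<alpha> i) * I \<eta> i - \<alpha> i * Ibarm \<eta> i)
    in (\<forall>i\<in>{1..n}. \<exists>C. \<forall>\<^sub>F \<eta> in at_top.
           \<bar>hb \<eta> i - h0 i - ai i * I \<eta> i - am i * Ibarm \<eta> i\<bar> \<le> C * (Ibar \<eta>)\<^sup>2)
     \<and> (\<forall>i\<in>{1..n}. ai i > 0 \<and> (am i < 0 \<longleftrightarrow> h0 i / H0 < 1 / 2))
     \<and> (\<forall>i\<in>{1..n}. \<exists>C. \<forall>\<^sub>F \<eta> in at_top.
           \<bar>hb \<eta> i / Hb \<eta> - h0 i / H0 - \<alpha>0 * Q \<eta> i\<bar> \<le> C * (Ibar \<eta>)\<^sup>2)
     \<and> \<alpha>0 > 0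
     \<and> (\<forall>i\<in>{1..n}. 0 < \<alpha> i \<and> \<alpha> i < 1)
     \<and> (\<forall>i\<in>{1..n}. \<forall>j\<in>{1..n}. ct i < ct j \<longrightarrow> (\<forall>\<^sub>F \<eta> in at_top. Q \<eta> i < Q \<eta> j))"
proof -
  interpret mining_game ct R \<gamma> K N n
    using assms(1-7,9) by unfold_locales
  show ?thesis
    unfolding Let_def
    using miner_hashrate_expansion coefficient_signs miner_share_expansion \<alpha>0_pos
      share_shift_strict_mono
    by simp
qed

end
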